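(* Let $X\subseteq\mathbb{C}^n$ be a complex analytic variety, $x\in X$, and $M$ a free $\mathcal{O}_{X,x}$-submodule of $\mathcal{O}_{X,x}^p$ of rank $k\in\mathbb{N}$. Then $I_{2k}(M_D)\subseteq I_\Delta^{k-1}\,I_2((I_k(M))_D)$.
   Context: $z_1,\dots,z_n$ are coordinates on $\mathbb{C}^n$, $\pi_1,\pi_2:X\times X\to X$ the projections, $I_\Delta\subseteq\mathcal{O}_{X\times X,(x,x)}$ the ideal generated by $z_i\circ\pi_1-z_i\circ\pi_2$. For $h$ in $\mathcal{O}_{X,x}^p$ or $\mathcal{O}_{X,x}$, $h_D=(h\circ\pi_1,h\circ\pi_2)$; for a module or ideal $N$, $N_D$ is the submodule over $\mathcal{O}_{X\times X,(x,x)}$ generated by $\{h_D:h\in N\}$. $I_j(N)$ is the ideal of $j\times j$ minors of a matrix of generators of $N$. *)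

theory Defs
  imports "HOL-Analysis.Analysis"
begin

definition holo_on :: "(complex^'m \<Rightarrow> complex) \<Rightarrow> (complex^'m) set \<Rightarrow> bool" where
  "holo_on f U \<longleftrightarrow> open U \<and>
     (\<forall>z\<in>U. \<exists>D. (f has_derivative D) (at z) \<and> (\<forall>c v. D (c *s v) = c * D v))"

text \<open>f represents a germ at a of a holomorphic function (on the ambient space).\<close>
definition ogerm :: "complex^'m \<Rightarrow> (complex^'m \<Rightarrow> complex) \<Rightarrow> bool" where
  "ogerm a f \<longleftrightarrow> (\<exists>U. a \<in> U \<and> holo_on f U)"

text \<open>Equality of germs at a on the set S (i.e. equality in O_{S,a}).\<close>
definition germ_eq :: "(complex^'m) set \<Rightarrow> complex^'m \<Rightarrow> (complex^'m \<Rightarrow> complex)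
    \<Rightarrow> (complex^'m \<Rightarrow> complex) \<Rightarrow> bool" where
  "germ_eq S a f g \<longleftrightarrow> (\<exists>U. open U \<and> a \<in> U \<and> (\<forall>z\<in>U \<inter> S. f z = g z))"

definition analytic_variety :: "(complex^'n) set \<Rightarrow> bool" where
  "analytic_variety X \<longleftrightarrow> (\<forall>y\<in>X. \<exists>U F. open U \<and> y \<in> U \<and> finite F \<and>
      (\<forall>f\<in>F. holo_on f U) \<and> X \<inter> U = {z\<in>U. \<forall>f\<in>F. f z = 0})"

text \<open>The ideal of O_{S,a} generated by a set G of germs (as a set of representatives).\<close>
definition ideal_gen :: "(complex^'m) set \<Rightarrow> complex^'m \<Rightarrow> (complex^'m \<Rightarrow> complex) set
    \<Rightarrow> (complex^'m \<Rightarrow> complex) set" where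
  "ideal_gen S a G = {g. ogerm a g \<and> (\<exists>(N::nat) c q. (\<forall>j<N. ogerm a (c j) \<and> q j \<in> G) \<and>
       germ_eq S a g (\<lambda>z. \<Sum>j<N. c j z * q j z))}"

definition ideal_mult :: "(complex^'m) set \<Rightarrow> complex^'m \<Rightarrow> (complex^'m \<Rightarrow> complex) set
    \<Rightarrow> (complex^'m \<Rightarrow> complex) set \<Rightarrow> (complex^'m \<Rightarrow> complex) set" where
  "ideal_mult S a I J = ideal_gen S a {h. \<exists>f g. f \<in> I \<and> g \<in> J \<and> h = (\<lambda>z. f z * g z)}"

primrec ideal_pow :: "(complex^'m) set \<Rightarrow> complex^'m \<Rightarrow> (complex^'m \<Rightarrow> complex) set
    \<Rightarrow> nat \<Rightarrow> (complex^'m \<Rightarrow> complex) set" where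
  "ideal_pow S a I 0 = ideal_gen S a {\<lambda>_. 1}"
| "ideal_pow S a I (Suc n) = ideal_mult S a (ideal_pow S a I n) I"

definition detn :: "nat \<Rightarrow> (nat \<Rightarrow> nat \<Rightarrow> complex) \<Rightarrow> complex" where
  "detn N A = (\<Sum>\<pi> | \<pi> permutes {..<N}. of_int (sign \<pi>) * (\<Prod>i<N. A i (\<pi> i)))"

text \<open>j x j minors of the matrix whose columns are the (generating) vectors in N;
  vectors are functions from a finite row index type to germs.\<close>
definition minors :: "nat \<Rightarrow> ('r \<Rightarrow> complex^'m \<Rightarrow> complex) set \<Rightarrow> (complex^'m \<Rightarrow> complex) set" where
  "minors j N = {f. \<exists>col rw. (\<forall>t<j. col t \<in> N) \<and> inj_on rw {..<j} \<and>
       f = (\<lambda>z. detn j (\<lambda>s t. col t (rw s) z))}"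

text \<open>I_j(N) for the module generated by N in O_{S,a}^r.\<close>
definition I_minors :: "(complex^'m) set \<Rightarrow> complex^'m \<Rightarrow> nat
    \<Rightarrow> ('r \<Rightarrow> complex^'m \<Rightarrow> complex) set \<Rightarrow> (complex^'m \<Rightarrow> complex) set" where
  "I_minors S a j N = ideal_gen S a (minors j N)"

definition pi1 :: "complex^('n + 'n) \<Rightarrow> complex^'n" where
  "pi1 w = (\<chi> i. w $ Inl i)"

definition pi2 :: "complex^('n + 'n) \<Rightarrow> complex^'n" where
  "pi2 w = (\<chi> i. w $ Inr i)"

definition XX :: "(complex^'n) set \<Rightarrow> (complex^('n + 'n)) set" where
  "XX X = {w. pi1 w \<in> X \<and> pi2 w \<in> X}"

definition dpt :: "complex^'n \<Rightarrow> complex^('n + 'n)" where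
  "dpt x = (\<chi> j. case j of Inl i \<Rightarrow> x $ i | Inr i \<Rightarrow> x $ i)"

definition I_Delta :: "(complex^'n) set \<Rightarrow> complex^'n \<Rightarrow> (complex^('n + 'n) \<Rightarrow> complex) set" where
  "I_Delta X x = ideal_gen (XX X) (dpt x) {f. \<exists>i. f = (\<lambda>w. pi1 w $ i - pi2 w $ i)}"

text \<open>h_D = (h o pi1, h o pi2), a vector with rows indexed by 'r + 'r.\<close>
definition Dvec :: "('r \<Rightarrow> complex^'n \<Rightarrow> complex) \<Rightarrow> ('r + 'r) \<Rightarrow> complex^('n + 'n) \<Rightarrow> complex" where
  "Dvec h = (\<lambda>r w. case r of Inl r' \<Rightarrow> h r' (pi1 w) | Inr r' \<Rightarrow> h r' (pi2 w))"

text \<open>Generating set {h_D : h in N} of N_D.\<close>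
definition Dset :: "('r \<Rightarrow> complex^'n \<Rightarrow> complex) set \<Rightarrow> (('r + 'r) \<Rightarrow> complex^('n + 'n) \<Rightarrow> complex) set" where
  "Dset N = Dvec ` N"

text \<open>An ideal viewed as a submodule of O^1.\<close>
definition ideal_vecs :: "(complex^'n \<Rightarrow> complex) set \<Rightarrow> (unit \<Rightarrow> complex^'n \<Rightarrow> complex) set" where
  "ideal_vecs I = (\<lambda>g. \<lambda>_. g) ` I"

definition span_mod :: "(complex^'n) set \<Rightarrow> complex^'n \<Rightarrow> nat
    \<Rightarrow> (nat \<Rightarrow> 'p \<Rightarrow> complex^'n \<Rightarrow> complex) \<Rightarrow> ('p \<Rightarrow> complex^'n \<Rightarrow> complex) set" where
  "span_mod X x k m = {h. (\<forall>r. ogerm x (h r)) \<and> (\<exists>a. (\<forall>i<k. ogerm x (a i)) \<and>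
      (\<forall>r. germ_eq X x (h r) (\<lambda>z. \<Sum>i<k. a i z * m i r z)))}"

definition lin_indep_germs :: "(complex^'n) set \<Rightarrow> complex^'n \<Rightarrow> nat
    \<Rightarrow> (nat \<Rightarrow> 'p \<Rightarrow> complex^'n \<Rightarrow> complex) \<Rightarrow> bool" where
  "lin_indep_germs X x k m \<longleftrightarrow> (\<forall>i<k. \<forall>r. ogerm x (m i r)) \<and>
     (\<forall>a. (\<forall>i<k. ogerm x (a i)) \<and> (\<forall>r. germ_eq X x (\<lambda>z. \<Sum>i<k. a i z * m i r z) (\<lambda>_. 0))
        \<longrightarrow> (\<forall>i<k. germ_eq X x (a i) (\<lambda>_. 0)))"

end

(* Write the generators h of M as h = sum_i A_i m_i near x. At a point w of X x X near (x, x), a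
   2k x 2k minor of the h_D then factors as the product of a minor of the block-diagonal matrix
   diag(m(pi1 w), m(pi2 w)) and det [A(pi1 w); A(pi2 w) - A(pi1 w)].  The first factor vanishes
   unless the minor takes k rows from each copy, and then it is +-F(pi1 w) G(pi2 w) for k x k minors
   F, G of the m_i.  By Hadamard's lemma, proved here through Cauchy's formula for the partial
   derivatives, each entry of A(pi2 w) - A(pi1 w) is a holomorphic combination of the
   z_l o pi2 - z_l o pi1.  Expanding the second determinant, every term has k such factors:
   k - 1 of them lie in I_Delta^(k-1), and the last one times F(pi1 w) G(pi2 w) is a combination
   of 2 x 2 minors of (I_k(M))_D. *)

theory Submission
  imports Defs "HOL-Complex_Analysis.Cauchy_Integral_Formula" "Jordan_Normal_Form.Determinant"
begin

definition holo_deriv :: "(complex^'m \<Rightarrow> complex) \<Rightarrow> complex^'m \<Rightarrow> complex^'m \<Rightarrow> complex" where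
  "holo_deriv f z = frechet_derivative f (at z)"

lemma holo_on_open: "holo_on f U \<Longrightarrow> open U"
  by (simp add: holo_on_def)

lemma
  assumes "holo_on f U" "z \<in> U"
  shows holo_on_has_derivative: "(f has_derivative holo_deriv f z) (at z)"
    and holo_deriv_smult: "holo_deriv f z (c *s v) = c * holo_deriv f z v"
proof -
  obtain D where D: "(f has_derivative D) (at z)" "\<forall>c v. D (c *s v) = c * D v"
    using assms unfolding holo_on_def by blast
  moreover have "D = holo_deriv f z"
    using D(1) unfolding holo_deriv_def by (rule frechet_derivative_at)
  ultimately show "(f has_derivative holo_deriv f z) (at z)" "holo_deriv f z (c *s v) = c * holo_deriv f z v"
    by auto
qed

lemma linear_holo_deriv: "holo_on f U \<Longrightarrow> z \<in> U \<Longrightarrow> linear (holo_deriv f z)"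
  by (rule has_derivative_linear[OF holo_on_has_derivative])

lemma holo_on_continuous_on: "holo_on f U \<Longrightarrow> continuous_on U f"
  by (meson continuous_at_imp_continuous_on has_derivative_continuous holo_on_has_derivative)

lemma holo_deriv_expansion:
  assumes "holo_on f U" "z \<in> U"
  shows "holo_deriv f z v = (\<Sum>i\<in>UNIV. v $ i * holo_deriv f z (axis i 1))"
proof -
  have "holo_deriv f z v = holo_deriv f z (\<Sum>i\<in>UNIV. (v $ i) *s axis i 1)"
    by (simp add: basis_expansion)
  also have "\<dots> = (\<Sum>i\<in>UNIV. v $ i * holo_deriv f z (axis i 1))"
    using linear_holo_deriv[OF assms] holo_deriv_smult[OF assms] by (simp add: linear_sum)
  finally show ?thesis .
qed

lemma holo_onI:
  assumes "open U"
    and "\<And>z. z \<in> U \<Longrightarrow> (f has_derivative D z) (at z)"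
    and "\<And>z c v. z \<in> U \<Longrightarrow> D z (c *s v) = c * D z v"
  shows "holo_on f U"
  using assms unfolding holo_on_def by blast

lemma holo_on_subset: "holo_on f U \<Longrightarrow> open V \<Longrightarrow> V \<subseteq> U \<Longrightarrow> holo_on f V"
  unfolding holo_on_def by blast

lemma holo_on_const: "open U \<Longrightarrow> holo_on (\<lambda>z. c) U"
  by (rule holo_onI[where D = "\<lambda>_ _. 0"]) auto

lemma holo_on_add: "holo_on f U \<Longrightarrow> holo_on g U \<Longrightarrow> holo_on (\<lambda>z. f z + g z) U"
  by (rule holo_onI[where D = "\<lambda>z h. holo_deriv f z h + holo_deriv g z h"])
    (auto intro: holo_on_open has_derivative_add holo_on_has_derivative
      simp: holo_deriv_smult distrib_left)

lemma holo_on_mult: "holo_on f U \<Longrightarrow> holo_on g U \<Longrightarrow> holo_on (\<lambda>z. f z * g z) U"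
  by (rule holo_onI[where D = "\<lambda>z h. f z * holo_deriv g z h + holo_deriv f z h * g z"])
    (auto intro: holo_on_open has_derivative_mult holo_on_has_derivative
      simp: holo_deriv_smult distrib_left mult.left_commute)

lemma holo_on_uminus: "holo_on f U \<Longrightarrow> holo_on (\<lambda>z. - f z) U"
  using holo_on_mult[OF holo_on_const[of U "-1"]] holo_on_open by fastforce

lemma holo_on_compose_linear:
  fixes L :: "complex^'m \<Rightarrow> complex^'k"
  assumes f: "holo_on f U" and L: "bounded_linear L" and L_smult: "\<And>c v. L (c *s v) = c *s L v"
  shows "holo_on (\<lambda>w. f (L w)) (L -` U)"
proof (rule holo_onI[where D = "\<lambda>w h. holo_deriv f (L w) (L h)"])
  show "open (L -` U)"
    by (rule open_vimage[OF holo_on_open[OF f] linear_continuous_on[OF L]])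
qed (use has_derivative_compose[OF bounded_linear_imp_has_derivative[OF L] holo_on_has_derivative[OF f]]
       holo_deriv_smult[OF f] L_smult in auto)

lemma holo_on_component: "holo_on (\<lambda>z::complex^'m. z $ i) UNIV"
  by (rule holo_onI[where D = "\<lambda>_ h. h $ i"])
    (auto intro: bounded_linear_imp_has_derivative bounded_linear_vec_nth)

lemma ogermI: "holo_on f U \<Longrightarrow> a \<in> U \<Longrightarrow> ogerm a f"
  unfolding ogerm_def by blast

lemma ogerm_common_domain:
  assumes "ogerm a f" "ogerm a g"
  obtains U where "a \<in> U" "holo_on f U" "holo_on g U"
proof -
  obtain U V where U: "a \<in> U" "holo_on f U" and V: "a \<in> V" "holo_on g V"
    using assms unfolding ogerm_def by blast
  have "open (U \<inter> V)" using U V by (auto intro: holo_on_open)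
  then show thesis using U V by (intro that[of "U \<inter> V"]) (auto intro: holo_on_subset)
qed

lemma ogerm_const [simp, intro]: "ogerm a (\<lambda>z. c)"
  using holo_on_const[of UNIV] by (auto intro: ogermI)

lemma ogerm_add [intro]: "ogerm a f \<Longrightarrow> ogerm a g \<Longrightarrow> ogerm a (\<lambda>z. f z + g z)"
  by (erule ogerm_common_domain, assumption) (auto intro: ogermI holo_on_add)

lemma ogerm_mult [intro]: "ogerm a f \<Longrightarrow> ogerm a g \<Longrightarrow> ogerm a (\<lambda>z. f z * g z)"
  by (erule ogerm_common_domain, assumption) (auto intro: ogermI holo_on_mult)

lemma ogerm_uminus [intro]: "ogerm a f \<Longrightarrow> ogerm a (\<lambda>z. - f z)"
  unfolding ogerm_def using holo_on_uminus by blast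

lemma ogerm_diff [intro]: "ogerm a f \<Longrightarrow> ogerm a g \<Longrightarrow> ogerm a (\<lambda>z. f z - g z)"
  using ogerm_add[of a f "\<lambda>z. - g z"] by auto

lemma ogerm_sum: "finite T \<Longrightarrow> (\<And>i. i \<in> T \<Longrightarrow> ogerm a (f i)) \<Longrightarrow> ogerm a (\<lambda>z. \<Sum>i\<in>T. f i z)"
  by (induction T rule: finite_induct) auto

lemma ogerm_prod: "finite T \<Longrightarrow> (\<And>i. i \<in> T \<Longrightarrow> ogerm a (f i)) \<Longrightarrow> ogerm a (\<lambda>z. \<Prod>i\<in>T. f i z)"
  by (induction T rule: finite_induct) auto

lemma ogerm_component [simp, intro]: "ogerm a (\<lambda>z. z $ i)"
  using holo_on_component by (blast intro: ogermI)

lemma linear_pi1: "linear pi1" and linear_pi2: "linear pi2"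
  by (auto intro!: linearI simp: Finite_Cartesian_Product.vec_eq_iff pi1_def pi2_def)

lemma bounded_linear_pi1: "bounded_linear pi1" and bounded_linear_pi2: "bounded_linear pi2"
  using linear_pi1 linear_pi2 by (simp_all add: linear_conv_bounded_linear)

lemma pi1_smult: "pi1 (c *s v) = c *s pi1 v" and pi2_smult: "pi2 (c *s v) = c *s pi2 v"
  by (simp_all add: Finite_Cartesian_Product.vec_eq_iff pi1_def pi2_def)

lemma pi1_dpt [simp]: "pi1 (dpt x) = x" and pi2_dpt [simp]: "pi2 (dpt x) = x"
  by (simp_all add: Finite_Cartesian_Product.vec_eq_iff pi1_def pi2_def dpt_def)

lemma continuous_on_pi1 [continuous_intros]: "continuous_on S f \<Longrightarrow> continuous_on S (\<lambda>x. pi1 (f x))"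
  and continuous_on_pi2 [continuous_intros]: "continuous_on S f \<Longrightarrow> continuous_on S (\<lambda>x. pi2 (f x))"
  by (simp_all add: bounded_linear.continuous_on bounded_linear_pi1 bounded_linear_pi2)

lemma ogerm_pi1 [intro]: "ogerm x f \<Longrightarrow> ogerm (dpt x) (\<lambda>w. f (pi1 w))"
  unfolding ogerm_def using holo_on_compose_linear[OF _ bounded_linear_pi1 pi1_smult]
  by (metis pi1_dpt vimageI2)

lemma ogerm_pi2 [intro]: "ogerm x f \<Longrightarrow> ogerm (dpt x) (\<lambda>w. f (pi2 w))"
  unfolding ogerm_def using holo_on_compose_linear[OF _ bounded_linear_pi2 pi2_smult]
  by (metis pi2_dpt vimageI2)

section \<open>Cauchy's formula for partial derivatives\<close>

lemma norm_axis: "norm (axis j (u::complex)) = norm u"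
proof -
  have "norm (axis j u) = sqrt (\<Sum>i\<in>UNIV. (norm (axis j u $ i))\<^sup>2)"
    by (simp add: norm_vec_def L2_set_def)
  also have "\<dots> = sqrt (\<Sum>i\<in>UNIV. if i = j then (norm u)\<^sup>2 else 0)"
    by (rule arg_cong[where f = sqrt], rule sum.cong) (auto simp: axis_def)
  finally show ?thesis by simp
qed

lemma bounded_linear_axis: "bounded_linear (axis j :: complex \<Rightarrow> complex^'m)"
  unfolding linear_conv_bounded_linear[symmetric]
  by (rule linearI) (simp_all add: Finite_Cartesian_Product.vec_eq_iff axis_def)

lemma axis_zero [simp]: "axis j 0 = 0"
  by (simp add: Finite_Cartesian_Product.vec_eq_iff axis_def)

lemma axis_eq_smult: "axis j c = c *s axis j (1::complex)"
  by (simp add: Finite_Cartesian_Product.vec_eq_iff axis_def)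

lemma continuous_on_axis [continuous_intros]:
  "continuous_on S f \<Longrightarrow> continuous_on S (\<lambda>x. axis j (f x :: complex))"
  using bounded_linear.continuous_on[OF bounded_linear_axis] .

lemma has_field_derivative_axis_slice:
  assumes "holo_on a U" "z + axis j u \<in> U"
  shows "((\<lambda>u. a (z + axis j u)) has_field_derivative holo_deriv a (z + axis j u) (axis j 1)) (at u)"
proof -
  have "((\<lambda>u. z + axis j u) has_derivative axis j) (at u)"
    using has_derivative_add[OF has_derivative_const bounded_linear_imp_has_derivative[OF bounded_linear_axis]]
    by simp
  from has_derivative_compose[OF this holo_on_has_derivative[OF assms]]
  have "((\<lambda>u. a (z + axis j u)) has_derivative (\<lambda>h. holo_deriv a (z + axis j u) (axis j h))) (at u)" .
  moreover have "(\<lambda>h. holo_deriv a (z + axis j u) (axis j h)) = (*) (holo_deriv a (z + axis j u) (axis j 1))"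
    by (rule ext, subst axis_eq_smult) (simp only: holo_deriv_smult[OF assms] mult.commute)
  ultimately show ?thesis by (simp only: has_field_derivative_def)
qed

text \<open>The kernel is \<open>(2\<pi>i)\<^sup>-\<^sup>1 \<gamma>'(s) / \<gamma>(s)\<^sup>2\<close> for the circle \<open>\<gamma>(s) = r e\<^sup>2\<^sup>\<pi>\<^sup>i\<^sup>s\<close>,
  the one in Cauchy's formula for the first derivative at the centre.\<close>
definition cauchy_kernel :: "real \<Rightarrow> real \<Rightarrow> complex" where
  "cauchy_kernel r s = inverse (of_real r * exp (2 * of_real pi * \<i> * of_real s))"

lemma cauchy_kernel_circlepath:
  "r \<noteq> 0 \<Longrightarrow> 1 / (2 * of_real pi * \<i>) * (vector_derivative (circlepath 0 r) (at s) / (circlepath 0 r s)\<^sup>2)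
     = cauchy_kernel r s"
  unfolding cauchy_kernel_def vector_derivative_circlepath
  by (simp add: circlepath field_simps power2_eq_square)

lemma continuous_on_cauchy_kernel: "r \<noteq> 0 \<Longrightarrow> continuous_on S f \<Longrightarrow> continuous_on S (\<lambda>x. cauchy_kernel r (f x))"
  unfolding cauchy_kernel_def by (intro continuous_intros) auto

lemma continuous_on_circlepath [continuous_intros]:
  "continuous_on S f \<Longrightarrow> continuous_on S (\<lambda>x. circlepath z r (f x))"
  unfolding circlepath by (intro continuous_intros)

lemma norm_circlepath_0: "r \<ge> 0 \<Longrightarrow> norm (circlepath 0 r s) = r"
  by (simp add: circlepath norm_mult)

lemma holo_deriv_axis_eq_integral:
  assumes a: "holo_on a U" and r: "r > 0" and sub: "cball z r \<subseteq> U"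
  shows "holo_deriv a z (axis j 1) =
    integral {0..1} (\<lambda>s. cauchy_kernel r s * a (z + axis j (circlepath 0 r s)))"
proof -
  define W where "W = (\<lambda>u. z + axis j u) -` U"
  have "open W"
    unfolding W_def by (rule open_vimage[OF holo_on_open[OF a]]) (intro continuous_intros)
  have ball_W: "cball 0 r \<subseteq> W"
  proof
    fix u assume "u \<in> cball (0::complex) r"
    then have "z + axis j u \<in> cball z r" by (simp add: dist_norm norm_axis)
    then show "u \<in> W" using sub by (auto simp: W_def)
  qed
  have hol: "(\<lambda>u. a (z + axis j u)) holomorphic_on W"
    using has_field_derivative_axis_slice[OF a] unfolding holomorphic_on_def field_differentiable_def W_def
    by (meson has_field_derivative_at_within vimageE)
  have "((\<lambda>u. a (z + axis j u)) has_field_derivative 1 / (2 * of_real pi * \<i>) *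
      contour_integral (circlepath 0 r) (\<lambda>u. a (z + axis j u) / (u - 0)\<^sup>2)) (at 0)"
    using r ball_W subset_trans[OF ball_subset_cball ball_W] holomorphic_on_subset[OF hol]
      holomorphic_on_imp_continuous_on[OF hol]
    by (intro Cauchy_derivative_integral_circlepath) (auto intro: continuous_on_subset)
  moreover have "((\<lambda>u. a (z + axis j u)) has_field_derivative holo_deriv a z (axis j 1)) (at 0)"
    using has_field_derivative_axis_slice[OF a, of z j 0] subsetD[OF sub, of z] r by simp
  ultimately have "holo_deriv a z (axis j 1) = 1 / (2 * of_real pi * \<i>) *
      contour_integral (circlepath 0 r) (\<lambda>u. a (z + axis j u) / (u - 0)\<^sup>2)"
    by (rule DERIV_unique[rotated])
  also have "\<dots> = 1 / (2 * of_real pi * \<i>) *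
      integral {0..1} (\<lambda>s. a (z + axis j (circlepath 0 r s)) / (circlepath 0 r s)\<^sup>2 *
        vector_derivative (circlepath 0 r) (at s))"
    by (simp add: contour_integral_integral)
  also have "\<dots> = integral {0..1} (\<lambda>s. 1 / (2 * of_real pi * \<i>) *
      (a (z + axis j (circlepath 0 r s)) / (circlepath 0 r s)\<^sup>2 * vector_derivative (circlepath 0 r) (at s)))"
    by (rule integral_mult_right[symmetric])
  also have "\<dots> = integral {0..1} (\<lambda>s. cauchy_kernel r s * a (z + axis j (circlepath 0 r s)))"
    using r by (intro integral_cong) (simp only: cauchy_kernel_circlepath[symmetric] divide_inverse mult_ac)
  finally show ?thesis .
qed

lemma continuous_on_holo_deriv_axis:
  assumes a: "holo_on a U" and r: "r > 0" and sub: "\<And>z. z \<in> S \<Longrightarrow> cball z r \<subseteq> U"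
  shows "continuous_on S (\<lambda>z. holo_deriv a z (axis j 1))"
proof -
  have "continuous_on S (\<lambda>z. integral (cbox 0 1) (\<lambda>s. cauchy_kernel r s * a (z + axis j (circlepath 0 r s))))"
  proof (rule integral_continuous_on_param)
    have kernel: "continuous_on (S \<times> cbox 0 1) (\<lambda>p. cauchy_kernel r (snd p))"
      using r by (intro continuous_on_cauchy_kernel continuous_on_snd continuous_on_id) auto
    have point: "continuous_on (S \<times> cbox 0 1) (\<lambda>p. fst p + axis j (circlepath 0 r (snd p)))"
      by (intro continuous_intros)
    have "(\<lambda>p. fst p + axis j (circlepath 0 r (snd p))) ` (S \<times> cbox 0 1) \<subseteq> U"
    proof clarify
      fix z s assume "z \<in> S"
      have "z + axis j (circlepath 0 r s) \<in> cball z r"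
        using r by (simp add: dist_norm norm_axis norm_circlepath_0)
      then show "fst (z, s) + axis j (circlepath 0 r (snd (z, s))) \<in> U" using sub[OF \<open>z \<in> S\<close>] by auto
    qed
    from continuous_on_compose2[OF holo_on_continuous_on[OF a] point this]
    show "continuous_on (S \<times> cbox 0 1) (\<lambda>(z, s). cauchy_kernel r s * a (z + axis j (circlepath 0 r s)))"
      using continuous_on_mult[OF kernel] by (simp add: case_prod_beta)
  qed
  then show ?thesis
    by (rule continuous_on_eq) (simp add: holo_deriv_axis_eq_integral[OF a r sub] cbox_interval)
qed

lemma continuous_on_holo_deriv:
  assumes a: "holo_on a U"
  shows "continuous_on U (\<lambda>z. holo_deriv a z v)"
proof -
  have "isCont (\<lambda>z. holo_deriv a z (axis j 1)) z0" if "z0 \<in> U" for j z0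
  proof -
    from open_contains_cball[THEN iffD1, OF holo_on_open[OF a]] that
    obtain e' where e': "e' > 0" "cball z0 e' \<subseteq> U" by blast
    define e where "e = e' / 2"
    have "e > 0" using e' by (simp add: e_def)
    have "cball z e \<subseteq> U" if "z \<in> ball z0 e" for z
    proof
      fix y assume "y \<in> cball z e"
      then have "dist z0 y < e'"
        using that dist_triangle[of z0 y z] by (simp add: e_def)
      then show "y \<in> U" using e' by auto
    qed
    then have "continuous_on (ball z0 e) (\<lambda>z. holo_deriv a z (axis j 1))"
      by (rule continuous_on_holo_deriv_axis[OF a \<open>e > 0\<close>])
    then show ?thesis
      by (rule continuous_on_interior) (simp add: \<open>e > 0\<close>)
  qed
  then have "continuous_on U (\<lambda>z. \<Sum>i\<in>UNIV. v $ i * holo_deriv a z (axis i 1))"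
    by (intro continuous_on_sum continuous_on_mult continuous_on_const)
      (simp add: continuous_on_eq_continuous_at[OF holo_on_open[OF a]])
  then show ?thesis
    by (rule continuous_on_eq) (rule holo_deriv_expansion[OF a, symmetric])
qed

section \<open>Hadamard's lemma on the diagonal\<close>

lemma holo_on_parametric_integral:
  fixes f :: "complex^'m \<Rightarrow> 'b::euclidean_space \<Rightarrow> complex"
  assumes V: "open V" "convex V"
    and f': "\<And>w \<tau>. w \<in> V \<Longrightarrow> \<tau> \<in> cbox c d \<Longrightarrow> ((\<lambda>w. f w \<tau>) has_derivative blinfun_apply (f' w \<tau>)) (at w)"
    and f'_smult: "\<And>w \<tau> z v. w \<in> V \<Longrightarrow> \<tau> \<in> cbox c d \<Longrightarrow> f' w \<tau> (z *s v) = z * f' w \<tau> v"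
    and cont_f: "\<And>w. w \<in> V \<Longrightarrow> continuous_on (cbox c d) (f w)"
    and cont_f': "continuous_on (V \<times> cbox c d) (\<lambda>(w, \<tau>). f' w \<tau>)"
  shows "holo_on (\<lambda>w. integral (cbox c d) (f w)) V"
proof (rule holo_onI[where D = "\<lambda>w. blinfun_apply (integral (cbox c d) (f' w))", OF V(1)])
  fix w assume w: "w \<in> V"
  have "((\<lambda>w. integral (cbox c d) (f w)) has_derivative integral (cbox c d) (f' w)) (at w within V)"
    by (rule leibniz_rule[where fx = f'])
      (use w V f' cont_f cont_f' in \<open>auto intro: has_derivative_at_withinI integrable_continuous\<close>)
  then show "((\<lambda>w. integral (cbox c d) (f w)) has_derivative integral (cbox c d) (f' w)) (at w)"
    using at_within_open[OF w V(1)] by simp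
  fix z v
  have "continuous_on (cbox c d) (Pair w)" "Pair w ` cbox c d \<subseteq> V \<times> cbox c d"
    using w by (auto intro: continuous_intros)
  from continuous_on_compose2[OF cont_f' this] have cont: "continuous_on (cbox c d) (f' w)"
    by simp
  have apply_integral: "integral (cbox c d) (f' w) u = integral (cbox c d) (\<lambda>\<tau>. f' w \<tau> u)" for u
    using integral_linear[OF integrable_continuous[OF cont] bounded_linear_apply_blinfun[of u]]
    by (simp add: o_def)
  show "integral (cbox c d) (f' w) (z *s v) = z * integral (cbox c d) (f' w) v"
    unfolding apply_integral using f'_smult[OF w] by (simp add: integral_mult_right cong: integral_cong)
qed

lemma holo_on_diff_eq_integral:
  assumes a: "holo_on a U" and seg: "\<And>t. t \<in> {0..1} \<Longrightarrow> p + t *\<^sub>R (q - p) \<in> U"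
  shows "a q - a p = integral {0..1} (\<lambda>t. holo_deriv a (p + t *\<^sub>R (q - p)) (q - p))"
proof -
  have "((\<lambda>t. a (p + t *\<^sub>R (q - p))) has_vector_derivative holo_deriv a (p + t *\<^sub>R (q - p)) (q - p))
      (at t within {0..1})" if "t \<in> {0..1}" for t
  proof -
    have "((\<lambda>t. p + t *\<^sub>R (q - p)) has_derivative (\<lambda>h. h *\<^sub>R (q - p))) (at t within {0..1})"
      by (auto intro!: derivative_eq_intros)
    from has_derivative_compose[OF this holo_on_has_derivative[OF a seg[OF that]]]
    show ?thesis
      using linear_cmul[OF linear_holo_deriv[OF a seg[OF that]]] by (simp add: has_vector_derivative_def)
  qed
  from fundamental_theorem_of_calculus[OF _ this]
  show ?thesis by (simp add: integral_unique)
qed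

definition diag_ball :: "complex^'n \<Rightarrow> real \<Rightarrow> (complex^('n + 'n)) set" where
  "diag_ball x r = {w. pi1 w \<in> ball x r \<and> pi2 w \<in> ball x r}"

definition diag_segment :: "real \<Rightarrow> complex^('n + 'n) \<Rightarrow> complex^'n" where
  "diag_segment t w = pi1 w + t *\<^sub>R (pi2 w - pi1 w)"

lemma diag_ball_eq: "diag_ball x r = pi1 -` ball x r \<inter> pi2 -` ball x r"
  by (auto simp: diag_ball_def)

lemma open_diag_ball: "open (diag_ball x r)"
  unfolding diag_ball_eq
  by (intro open_Int open_vimage open_ball linear_continuous_on bounded_linear_pi1 bounded_linear_pi2)

lemma convex_diag_ball: "convex (diag_ball x r)"
  unfolding diag_ball_eq by (intro convex_Int convex_linear_vimage linear_pi1 linear_pi2 convex_ball)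

lemma dpt_in_diag_ball: "r > 0 \<Longrightarrow> dpt x \<in> diag_ball x r"
  by (simp add: diag_ball_def)

lemma bounded_linear_diag_segment: "bounded_linear (diag_segment t)"
  unfolding diag_segment_def
  by (intro bounded_linear_add bounded_linear_pi1 bounded_linear_compose[OF bounded_linear_scaleR_right]
      bounded_linear_sub bounded_linear_pi2)

lemma diag_segment_smult: "diag_segment t (c *s w) = c *s diag_segment t w"
  by (simp add: Finite_Cartesian_Product.vec_eq_iff diag_segment_def pi1_def pi2_def algebra_simps)

lemma diag_segment_in_ball: "w \<in> diag_ball x r \<Longrightarrow> t \<in> {0..1} \<Longrightarrow> diag_segment t w \<in> ball x r"
  using convexD[OF convex_ball, of "pi1 w" x r "pi2 w" "1 - t" t]
  by (simp add: diag_ball_def diag_segment_def algebra_simps)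

lemma cball_diag_segment_subset:
  assumes "w \<in> diag_ball x r" "t \<in> {0..1}"
  shows "cball (diag_segment t w) r \<subseteq> ball x (2 * r)"
proof
  fix y assume "y \<in> cball (diag_segment t w) r"
  then show "y \<in> ball x (2 * r)"
    using diag_segment_in_ball[OF assms] dist_triangle[of x y "diag_segment t w"] by simp
qed

text \<open>Integrating over \<open>s\<close> gives the partial derivative \<open>\<partial>\<^sub>l a\<close> at \<open>diag_segment t w\<close> by Cauchy's
  formula; integrating then over \<open>t\<close> gives the coefficient of \<open>z\<^sub>l \<circ> \<pi>\<^sub>2 - z\<^sub>l \<circ> \<pi>\<^sub>1\<close> in \<open>a \<circ> \<pi>\<^sub>2 - a \<circ> \<pi>\<^sub>1\<close>.\<close>
definition hadamard_integrand ::
    "(complex^'n \<Rightarrow> complex) \<Rightarrow> real \<Rightarrow> 'n \<Rightarrow> complex^('n + 'n) \<Rightarrow> real \<times> real \<Rightarrow> complex" where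
  "hadamard_integrand a r l w \<tau> =
     cauchy_kernel r (snd \<tau>) * a (diag_segment (fst \<tau>) w + axis l (circlepath 0 r (snd \<tau>)))"

definition hadamard_integrand_deriv ::
    "(complex^'n \<Rightarrow> complex) \<Rightarrow> real \<Rightarrow> 'n \<Rightarrow> complex^('n + 'n) \<Rightarrow> real \<times> real \<Rightarrow>
      (complex^('n + 'n)) \<Rightarrow>\<^sub>L complex" where
  "hadamard_integrand_deriv a r l w \<tau> = Blinfun (\<lambda>h. cauchy_kernel r (snd \<tau>) *
     holo_deriv a (diag_segment (fst \<tau>) w + axis l (circlepath 0 r (snd \<tau>))) (diag_segment (fst \<tau>) h))"

context
  fixes a :: "complex^'n \<Rightarrow> complex" and U x r
  assumes a: "holo_on a U" and r: "r > 0" and ball_U: "ball x (2 * r) \<subseteq> U"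
begin

lemma hadamard_point_in_domain:
  assumes "w \<in> diag_ball x r" "\<tau> \<in> cbox (0, 0) (1, 1)"
  shows "diag_segment (fst \<tau>) w + axis l (circlepath 0 r (snd \<tau>)) \<in> U"
proof -
  have "fst \<tau> \<in> {0..1}" using assms(2) by (cases \<tau>) (simp add: cbox_Pair_iff)
  moreover have "diag_segment (fst \<tau>) w + axis l (circlepath 0 r (snd \<tau>)) \<in> cball (diag_segment (fst \<tau>) w) r"
    using r by (simp add: dist_norm norm_axis norm_circlepath_0)
  ultimately show ?thesis
    using cball_diag_segment_subset[OF assms(1)] ball_U by blast
qed

lemma continuous_on_hadamard_integrand:
  "continuous_on (diag_ball x r \<times> cbox (0, 0) (1, 1)) (\<lambda>(w, \<tau>). hadamard_integrand a r l w \<tau>)"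
proof -
  let ?P = "\<lambda>p. diag_segment (fst (snd p)) (fst p) + axis l (circlepath 0 r (snd (snd p)))"
  have "continuous_on (diag_ball x r \<times> cbox (0, 0) (1, 1)) ?P"
    unfolding diag_segment_def by (intro continuous_intros)
  moreover have "?P ` (diag_ball x r \<times> cbox (0, 0) (1, 1)) \<subseteq> U"
    using hadamard_point_in_domain by auto
  ultimately have "continuous_on (diag_ball x r \<times> cbox (0, 0) (1, 1)) (\<lambda>p. a (?P p))"
    by (rule continuous_on_compose2[OF holo_on_continuous_on[OF a]])
  moreover have "continuous_on (diag_ball x r \<times> cbox (0, 0) (1, 1)) (\<lambda>p. cauchy_kernel r (snd (snd p)))"
    using r by (intro continuous_on_cauchy_kernel continuous_intros) auto
  ultimately show ?thesis
    unfolding hadamard_integrand_def case_prod_beta by (intro continuous_on_mult)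
qed

lemma continuous_on_hadamard_integrand_slice:
  assumes "w \<in> diag_ball x r"
  shows "continuous_on (cbox (0, 0) (1, 1)) (hadamard_integrand a r l w)"
proof -
  have "continuous_on (cbox (0, 0) (1, 1)) (Pair w)"
    "Pair w ` cbox (0, 0) (1, 1) \<subseteq> diag_ball x r \<times> cbox (0, 0) (1, 1)"
    using assms by (auto intro: continuous_intros)
  from continuous_on_compose2[OF continuous_on_hadamard_integrand this] show ?thesis by simp
qed

lemma hadamard_integrand_deriv_apply:
  assumes "w \<in> diag_ball x r" "\<tau> \<in> cbox (0, 0) (1, 1)"
  shows "blinfun_apply (hadamard_integrand_deriv a r l w \<tau>) = (\<lambda>h. cauchy_kernel r (snd \<tau>) *
     holo_deriv a (diag_segment (fst \<tau>) w + axis l (circlepath 0 r (snd \<tau>))) (diag_segment (fst \<tau>) h))"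
  unfolding hadamard_integrand_deriv_def
  by (intro bounded_linear_Blinfun_apply bounded_linear_compose[OF bounded_linear_mult_right]
      bounded_linear_compose[OF _ bounded_linear_diag_segment]
      has_derivative_bounded_linear[OF holo_on_has_derivative[OF a hadamard_point_in_domain[OF assms]]])

lemma hadamard_integrand_has_derivative:
  assumes "w \<in> diag_ball x r" "\<tau> \<in> cbox (0, 0) (1, 1)"
  shows "((\<lambda>w. hadamard_integrand a r l w \<tau>) has_derivative hadamard_integrand_deriv a r l w \<tau>) (at w)"
proof -
  have "((\<lambda>w. diag_segment (fst \<tau>) w + axis l (circlepath 0 r (snd \<tau>)))
      has_derivative diag_segment (fst \<tau>)) (at w)"
    using has_derivative_add_const[OF bounded_linear_imp_has_derivative[OF bounded_linear_diag_segment]] .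
  from has_derivative_mult_right[OF has_derivative_compose[OF this
        holo_on_has_derivative[OF a hadamard_point_in_domain[OF assms]]]]
  show ?thesis
    unfolding hadamard_integrand_def hadamard_integrand_deriv_apply[OF assms] .
qed

lemma continuous_on_hadamard_integrand_deriv:
  "continuous_on (diag_ball x r \<times> cbox (0, 0) (1, 1)) (\<lambda>(w, \<tau>). hadamard_integrand_deriv a r l w \<tau>)"
proof (rule continuous_on_blinfun_componentwise)
  fix e :: "complex^('n + 'n)"
  let ?S = "diag_ball x r \<times> cbox (0, 0) (1, 1)"
  let ?P = "\<lambda>p. diag_segment (fst (snd p)) (fst p) + axis l (circlepath 0 r (snd (snd p)))"
  let ?D = "\<lambda>p v. holo_deriv a (?P p) v"
  have P: "continuous_on ?S ?P" "?P ` ?S \<subseteq> U"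
    using hadamard_point_in_domain by (auto simp: diag_segment_def intro!: continuous_intros)
  have D: "continuous_on ?S (\<lambda>p. ?D p v)" for v
    by (rule continuous_on_compose2[OF continuous_on_holo_deriv[OF a] P])
  have "hadamard_integrand_deriv a r l (fst p) (snd p) e
      = cauchy_kernel r (snd (snd p)) * (?D p (pi1 e) + fst (snd p) *\<^sub>R (?D p (pi2 e) - ?D p (pi1 e)))"
    if "p \<in> ?S" for p
  proof -
    have "linear (?D p)"
      using linear_holo_deriv[OF a] hadamard_point_in_domain that by (cases p) auto
    then show ?thesis
      using hadamard_integrand_deriv_apply[of "fst p" "snd p"] that
      by (cases p) (simp add: diag_segment_def linear_add linear_diff linear_cmul)
  qed
  moreover have "continuous_on ?S (\<lambda>p. cauchy_kernel r (snd (snd p)) *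
      (?D p (pi1 e) + fst (snd p) *\<^sub>R (?D p (pi2 e) - ?D p (pi1 e))))"
    using r by (intro continuous_intros continuous_on_cauchy_kernel D) auto
  ultimately show
    "continuous_on ?S (\<lambda>p. blinfun_apply (case p of (w, \<tau>) \<Rightarrow> hadamard_integrand_deriv a r l w \<tau>) e)"
    by (simp add: case_prod_beta cong: continuous_on_cong)
qed

lemma holo_on_hadamard_coefficient:
  "holo_on (\<lambda>w. integral (cbox (0, 0) (1, 1)) (hadamard_integrand a r l w)) (diag_ball x r)"
proof (rule holo_on_parametric_integral[OF open_diag_ball convex_diag_ball])
  fix w z v and \<tau> :: "real \<times> real" assume w\<tau>: "w \<in> diag_ball x r" "\<tau> \<in> cbox (0, 0) (1, 1)"
  show "hadamard_integrand_deriv a r l w \<tau> (z *s v) = z * hadamard_integrand_deriv a r l w \<tau> v"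
    by (simp add: hadamard_integrand_deriv_apply[OF w\<tau>] diag_segment_smult
        holo_deriv_smult[OF a hadamard_point_in_domain[OF w\<tau>]])
qed (auto intro: hadamard_integrand_has_derivative continuous_on_hadamard_integrand_deriv
      continuous_on_hadamard_integrand_slice)

lemma hadamard_identity:
  assumes w: "w \<in> diag_ball x r"
  shows "a (pi2 w) - a (pi1 w) =
    (\<Sum>l\<in>UNIV. (pi2 w $ l - pi1 w $ l) * integral (cbox (0, 0) (1, 1)) (hadamard_integrand a r l w))"
proof -
  let ?d = "pi2 w - pi1 w"
  let ?I = "\<lambda>l t. integral {0..1} (\<lambda>s. hadamard_integrand a r l w (t, s))"
  have cball_U: "cball (diag_segment t w) r \<subseteq> U" if "t \<in> {0..1}" for t
    using cball_diag_segment_subset[OF w that] ball_U by blast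
  have seg_U: "diag_segment t w \<in> U" if "t \<in> {0..1}" for t
    using cball_U[OF that] centre_in_cball[of "diag_segment t w" r] r by auto
  have partial: "holo_deriv a (diag_segment t w) ?d = (\<Sum>l\<in>UNIV. ?d $ l * ?I l t)" if "t \<in> {0..1}" for t
    using holo_deriv_expansion[OF a seg_U[OF that]] holo_deriv_axis_eq_integral[OF a r cball_U[OF that]]
    by (simp add: hadamard_integrand_def)
  have cont_I: "continuous_on {0..1} (?I l)" for l
  proof -
    have "continuous_on (cbox 0 1 \<times> cbox 0 1) (\<lambda>(t, s). hadamard_integrand a r l w (t, s))"
      using continuous_on_hadamard_integrand_slice[OF w] by (simp add: cbox_Pair_eq)
    from integral_continuous_on_param[OF this] show ?thesis by (simp add: cbox_interval)
  qed
  have "a (pi2 w) - a (pi1 w) = integral {0..1} (\<lambda>t. holo_deriv a (diag_segment t w) ?d)"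
    using holo_on_diff_eq_integral[OF a seg_U[unfolded diag_segment_def]] by (simp add: diag_segment_def)
  also have "\<dots> = integral {0..1} (\<lambda>t. \<Sum>l\<in>UNIV. ?d $ l * ?I l t)"
    by (rule integral_cong) (rule partial)
  also have "\<dots> = (\<Sum>l\<in>UNIV. ?d $ l * integral {0..1} (?I l))"
    by (subst integral_sum) (auto intro!: integrable_continuous_interval continuous_intros cont_I)
  also have "\<dots> = (\<Sum>l\<in>UNIV. ?d $ l * integral (cbox (0, 0) (1, 1)) (hadamard_integrand a r l w))"
    using integral_prod_continuous[OF continuous_on_hadamard_integrand_slice[OF w]]
    by (simp add: cbox_interval)
  finally show ?thesis by simp
qed

end

lemma hadamard_lemma:
  assumes "ogerm x a"
  obtains V b where "open V" "dpt x \<in> V" "\<And>l. holo_on (b l) V"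
    "\<And>w. w \<in> V \<Longrightarrow> a (pi2 w) - a (pi1 w) = (\<Sum>l\<in>UNIV. (pi2 w $ l - pi1 w $ l) * b l w)"
proof -
  obtain U where "x \<in> U" and a: "holo_on a U" using assms ogerm_def by blast
  then obtain e where "e > 0" "ball x e \<subseteq> U" using open_contains_ball holo_on_open by blast
  then have "ball x (2 * (e / 2)) \<subseteq> U" "e / 2 > 0" by simp_all
  from holo_on_hadamard_coefficient[OF a this(2,1)] hadamard_identity[OF a this(2,1)]
  show thesis
    by (intro that[OF open_diag_ball dpt_in_diag_ball[OF \<open>e / 2 > 0\<close>]]) blast+
qed

lemma hadamard_lemma_family:
  assumes "finite T" "\<forall>p\<in>T. ogerm x (A p)"
  obtains W b where "open W" "dpt x \<in> W" "\<forall>p\<in>T. \<forall>l. ogerm (dpt x) (b p l)"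
    "\<forall>p\<in>T. \<forall>w\<in>W. A p (pi2 w) - A p (pi1 w) = (\<Sum>l\<in>UNIV. (pi2 w $ l - pi1 w $ l) * b p l w)"
proof -
  have "\<exists>Vb. open (fst Vb) \<and> dpt x \<in> fst Vb \<and> (\<forall>l. holo_on (snd Vb l) (fst Vb)) \<and>
      (\<forall>w\<in>fst Vb. A p (pi2 w) - A p (pi1 w) = (\<Sum>l\<in>UNIV. (pi2 w $ l - pi1 w $ l) * snd Vb l w))"
    if "p \<in> T" for p
  proof (rule hadamard_lemma[OF bspec[OF assms(2) that]])
    fix V b assume "open V" "dpt x \<in> V" "\<And>l. holo_on (b l) V"
      "\<And>w. w \<in> V \<Longrightarrow> A p (pi2 w) - A p (pi1 w) = (\<Sum>l\<in>UNIV. (pi2 w $ l - pi1 w $ l) * b l w)"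
    then show ?thesis by (intro exI[of _ "(V, b)"]) simp
  qed
  then have "\<forall>p\<in>T. \<exists>Vb. open (fst Vb) \<and> dpt x \<in> fst Vb \<and> (\<forall>l. holo_on (snd Vb l) (fst Vb)) \<and>
      (\<forall>w\<in>fst Vb. A p (pi2 w) - A p (pi1 w) = (\<Sum>l\<in>UNIV. (pi2 w $ l - pi1 w $ l) * snd Vb l w))"
    by (rule ballI)
  from bchoice[OF this] obtain Vb where Vb: "\<forall>p\<in>T. open (fst (Vb p)) \<and> dpt x \<in> fst (Vb p) \<and>
      (\<forall>l. holo_on (snd (Vb p) l) (fst (Vb p))) \<and>
      (\<forall>w\<in>fst (Vb p). A p (pi2 w) - A p (pi1 w) = (\<Sum>l\<in>UNIV. (pi2 w $ l - pi1 w $ l) * snd (Vb p) l w))"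
    by (rule exE)
  define V where "V p = fst (Vb p)" for p
  define b where "b p = snd (Vb p)" for p
  have V: "\<And>p. p \<in> T \<Longrightarrow> open (V p)" "\<And>p. p \<in> T \<Longrightarrow> dpt x \<in> V p"
    and b: "\<And>p l. p \<in> T \<Longrightarrow> holo_on (b p l) (V p)"
    and eq: "\<And>p w. p \<in> T \<Longrightarrow> w \<in> V p \<Longrightarrow> A p (pi2 w) - A p (pi1 w) = (\<Sum>l\<in>UNIV. (pi2 w $ l - pi1 w $ l) * b p l w)"
    using Vb by (auto simp: V_def b_def)
  show thesis
  proof (rule that[of "\<Inter>p\<in>T. V p" b])
    show "open (\<Inter>p\<in>T. V p)" using assms(1) V(1) by (intro open_INT) auto
    show "dpt x \<in> (\<Inter>p\<in>T. V p)" using V(2) by blast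
    show "\<forall>p\<in>T. \<forall>l. ogerm (dpt x) (b p l)" using b V(2) by (blast intro: ogermI)
    show "\<forall>p\<in>T. \<forall>w\<in>\<Inter>p\<in>T. V p. A p (pi2 w) - A p (pi1 w) = (\<Sum>l\<in>UNIV. (pi2 w $ l - pi1 w $ l) * b p l w)"
      using eq by blast
  qed
qed

section \<open>Determinants\<close>

lemma sum_lessThan_add: "(\<Sum>j<m + (n::nat). f j) = (\<Sum>j<m. f j) + (\<Sum>j<n. f (m + j))"
  by (induction n) (auto simp: add.assoc)

lemma prod_lessThan_add: "(\<Prod>j<m + (n::nat). f j) = (\<Prod>j<m. f j) * (\<Prod>j<n. f (m + j))"
  by (induction n) (auto simp: mult.assoc)

lemma detn_det: "detn N A = Determinant.det (Matrix.mat N N (\<lambda>(i, j). A i j))"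
proof -
  have "Determinant.det (Matrix.mat N N (\<lambda>(i, j). A i j)) =
      (\<Sum>p | p permutes {0..<N}. of_int (sign p) * (\<Prod>i = 0..<N. Matrix.mat N N (\<lambda>(i, j). A i j) $$ (i, p i)))"
    by (rule det_def') simp
  also have "\<dots> = (\<Sum>p | p permutes {..<N}. of_int (sign p) * (\<Prod>i<N. A i (p i)))"
    by (intro sum.cong prod.cong arg_cong[where f = "\<lambda>x. _ * x"])
      (auto simp: atLeast0LessThan dest: permutes_in_image)
  finally show ?thesis by (simp add: detn_def)
qed

lemma detn_cong: "(\<And>s t. s < N \<Longrightarrow> t < N \<Longrightarrow> A s t = A' s t) \<Longrightarrow> detn N A = detn N A'"
  unfolding detn_def
  by (intro sum.cong prod.cong arg_cong[where f = "\<lambda>x. _ * x"] refl) (auto dest: permutes_in_image)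

lemma detn_2: "detn 2 A = A 0 0 * A 1 1 - A 0 1 * A 1 0"
proof -
  have "Matrix.mat 2 2 (\<lambda>(i, j). A i j) \<in> carrier_mat 2 2" by simp
  from laplace_expansion_column[OF this, of 0] show ?thesis
    unfolding detn_det by (simp add: cofactor_def mat_delete_def det_single numeral_2_eq_2 lessThan_Suc)
qed

lemma detn_mult: "detn n (\<lambda>s t. \<Sum>i<n. P s i * Q i t) = detn n P * detn n Q"
proof -
  have "Matrix.mat n n (\<lambda>(s, t). \<Sum>i<n. P s i * Q i t) =
      Matrix.mat n n (\<lambda>(s, i). P s i) * Matrix.mat n n (\<lambda>(i, t). Q i t)"
    by (rule eq_matI) (auto simp: scalar_prod_def atLeast0LessThan)
  then show ?thesis
    unfolding detn_det by (simp add: det_mult[of _ n])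
qed

lemma detn_subtract_upper_rows:
  "detn (2 * k) (\<lambda>i t. if i < k then A i t else B (i - k) t - A (i - k) t)
     = detn (2 * k) (\<lambda>i t. if i < k then A i t else B (i - k) t)"
proof -
  define n where "n = 2 * k"
  define L where "L i i' = (if i' = i then 1 else 0) - (if k \<le> i \<and> i' = i - k then 1 else (0::complex))" for i i'
  have "(\<Sum>i'<n. L i i' * (if i' < k then A i' t else B (i' - k) t)) =
      (if i < k then A i t else B (i - k) t - A (i - k) t)" if "i < n" for i t
    using that
    by (auto simp: L_def n_def left_diff_distrib sum_subtractf if_distrib[of "\<lambda>x. x * _"] sum.If_cases)
  then have "detn n (\<lambda>i t. if i < k then A i t else B (i - k) t - A (i - k) t)
      = detn n L * detn n (\<lambda>i t. if i < k then A i t else B (i - k) t)"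
    by (subst detn_mult[symmetric]) (rule detn_cong, simp)
  moreover have "detn n L = 1"
  proof -
    have "Determinant.det (Matrix.mat n n (\<lambda>(i, j). L i j)) =
        prod_list (diag_mat (Matrix.mat n n (\<lambda>(i, j). L i j)))"
      by (rule det_lower_triangular[of n]) (auto simp: L_def)
    also have "diag_mat (Matrix.mat n n (\<lambda>(i, j). L i j)) = map (\<lambda>i. 1) [0..<n]"
      unfolding diag_mat_def by (auto simp: L_def n_def)
    also have "prod_list (map (\<lambda>i. 1::complex) [0..<n]) = 1"
      by (simp add: map_replicate_const)
    finally show ?thesis by (simp add: detn_det)
  qed
  ultimately show ?thesis by (simp add: n_def)
qed

text \<open>Rows \<open>rw 0, \<dots>, rw (2k - 1)\<close> of the block-diagonal matrix with blocks \<open>(M1 i r)\<^sub>r\<^sub>,\<^sub>i\<close> and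
  \<open>(M2 i r)\<^sub>r\<^sub>,\<^sub>i\<close>, rows indexed by \<open>'p + 'p\<close>.\<close>
definition diag_block_rows ::
    "nat \<Rightarrow> (nat \<Rightarrow> 'p + 'p) \<Rightarrow> (nat \<Rightarrow> 'p \<Rightarrow> complex) \<Rightarrow> (nat \<Rightarrow> 'p \<Rightarrow> complex) \<Rightarrow> nat \<Rightarrow> nat \<Rightarrow> complex" where
  "diag_block_rows k rw M1 M2 s i =
     (case rw s of Inl r \<Rightarrow> if i < k then M1 i r else 0 | Inr r \<Rightarrow> if i < k then 0 else M2 (i - k) r)"

lemma detn_block_factor:
  assumes B: "\<And>s t. s < 2 * k \<Longrightarrow> t < 2 * k \<Longrightarrow>
    B s t = (case rw s of Inl r \<Rightarrow> \<Sum>i<k. A1 t i * M1 i r | Inr r \<Rightarrow> \<Sum>i<k. A2 t i * M2 i r)"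
  shows "detn (2 * k) B = detn (2 * k) (diag_block_rows k rw M1 M2) *
    detn (2 * k) (\<lambda>i t. if i < k then A1 t i else A2 t (i - k) - A1 t (i - k))"
proof -
  have "B s t = (\<Sum>i<2 * k. diag_block_rows k rw M1 M2 s i * (if i < k then A1 t i else A2 t (i - k)))"
    if "s < 2 * k" "t < 2 * k" for s t
    using B[OF that] unfolding mult_2 sum_lessThan_add
    by (cases "rw s") (simp_all add: diag_block_rows_def mult.commute)
  then have "detn (2 * k) B = detn (2 * k) (diag_block_rows k rw M1 M2) *
      detn (2 * k) (\<lambda>i t. if i < k then A1 t i else A2 t (i - k))"
    by (subst detn_mult[symmetric]) (rule detn_cong)
  then show ?thesis
    using detn_subtract_upper_rows[of k "\<lambda>i t. A1 t i" "\<lambda>i t. A2 t i"] by simp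
qed

lemma detn_diag_block_rows_eq_0:
  assumes "card {s \<in> {..<2 * k}. isl (rw s)} \<noteq> k"
  shows "detn (2 * k) (diag_block_rows k rw M1 M2) = 0"
  unfolding detn_def
proof (rule sum.neutral, rule ballI, rule ccontr)
  fix \<pi> assume "\<pi> \<in> {\<pi>. \<pi> permutes {..<2 * k}}"
  then have \<pi>: "\<pi> permutes {..<2 * k}" by simp
  assume "of_int (sign \<pi>) * (\<Prod>s<2 * k. diag_block_rows k rw M1 M2 s (\<pi> s)) \<noteq> 0"
  then have nz: "diag_block_rows k rw M1 M2 s (\<pi> s) \<noteq> 0" if "s < 2 * k" for s
    using that by auto
  define S1 where "S1 = {s \<in> {..<2 * k}. isl (rw s)}"
  define S2 where "S2 = {s \<in> {..<2 * k}. \<not> isl (rw s)}"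
  have "\<pi> s < k" if "s \<in> S1" for s
    using nz[of s] that by (cases "rw s") (auto simp: S1_def diag_block_rows_def split: if_splits)
  then have image_S1: "\<pi> ` S1 \<subseteq> {..<k}" by auto
  have "k \<le> \<pi> s \<and> \<pi> s < 2 * k" if "s \<in> S2" for s
    using nz[of s] that permutes_in_image[OF \<pi>, of s]
    by (cases "rw s") (auto simp: S2_def diag_block_rows_def split: if_splits)
  then have image_S2: "\<pi> ` S2 \<subseteq> {k..<2 * k}" by auto
  have "inj_on \<pi> S" for S
    using permutes_inj[OF \<pi>] inj_on_subset by blast
  then have "card S1 \<le> k" "card S2 \<le> k"
    using card_mono[OF _ image_S1] card_mono[OF _ image_S2] by (simp_all add: card_image)
  moreover have "S1 \<union> S2 = {..<2 * k}" "S1 \<inter> S2 = {}"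
    by (auto simp: S1_def S2_def)
  then have "card S1 + card S2 = 2 * k"
    using card_Un_disjoint[of S1 S2] by (simp add: S1_def S2_def)
  ultimately show False
    using assms by (simp add: S1_def)
qed

lemma permutation_sorting_rows:
  assumes "card {s \<in> {..<2 * k}. isl (rw s)} = k"
  obtains \<sigma> where "\<sigma> permutes {..<2 * k}" "\<And>s. s < k \<Longrightarrow> isl (rw (\<sigma> s))"
    "\<And>s. s < k \<Longrightarrow> \<not> isl (rw (\<sigma> (k + s)))"
proof -
  define S1 where "S1 = {s \<in> {..<2 * k}. isl (rw s)}"
  define S2 where "S2 = {s \<in> {..<2 * k}. \<not> isl (rw s)}"
  have "S1 \<union> S2 = {..<2 * k}" "S1 \<inter> S2 = {}"
    by (auto simp: S1_def S2_def)
  then have "card S2 = k"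
    using assms card_Un_disjoint[of S1 S2] by (simp add: S1_def S2_def)
  then obtain f1 f2 where f1: "bij_betw f1 {..<k} S1" and f2: "bij_betw f2 {k..<2 * k} S2"
    using assms finite_same_card_bij[of "{..<k}" S1] finite_same_card_bij[of "{k..<2 * k}" S2]
    by (auto simp: S1_def S2_def)
  define \<sigma> where "\<sigma> s = (if s < k then f1 s else if s < 2 * k then f2 s else s)" for s
  have "bij_betw \<sigma> ({..<k} \<union> {k..<2 * k}) (S1 \<union> S2)"
    by (rule bij_betw_combine[OF bij_betw_cong[THEN iffD1, OF _ f1] bij_betw_cong[THEN iffD1, OF _ f2]])
      (auto simp: \<sigma>_def S1_def S2_def)
  moreover have "{..<k} \<union> {k..<2 * k} = {..<2 * k}" by auto
  ultimately have "\<sigma> permutes {..<2 * k}"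
    using \<open>S1 \<union> S2 = {..<2 * k}\<close> by (intro bij_imp_permutes) (auto simp: \<sigma>_def)
  moreover have "isl (rw (\<sigma> s))" if "s < k" for s
    using bij_betwE[OF f1] that by (auto simp: \<sigma>_def S1_def)
  moreover have "\<not> isl (rw (\<sigma> (k + s)))" if "s < k" for s
    using bij_betwE[OF f2] that by (auto simp: \<sigma>_def S2_def)
  ultimately show thesis by (rule that)
qed

lemma detn_diag_block_rows_sorted:
  assumes \<sigma>: "\<sigma> permutes {..<2 * k}"
    and l: "\<And>s. s < k \<Longrightarrow> isl (rw (\<sigma> s))" and r: "\<And>s. s < k \<Longrightarrow> \<not> isl (rw (\<sigma> (k + s)))"
  shows "detn (2 * k) (diag_block_rows k rw M1 M2) = of_int (sign \<sigma>) *
      detn k (\<lambda>s i. M1 i (projl (rw (\<sigma> s)))) * detn k (\<lambda>s i. M2 i (projr (rw (\<sigma> (k + s)))))"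
proof -
  define n where "n = 2 * k"
  define P where "P = Matrix.mat n n (\<lambda>(i, j). diag_block_rows k rw M1 M2 i j)"
  define T where "T = Matrix.mat k k (\<lambda>(s, i). M1 i (projl (rw (\<sigma> s))))"
  define T' where "T' = Matrix.mat k k (\<lambda>(s, i). M2 i (projr (rw (\<sigma> (k + s)))))"
  have \<sigma>': "\<sigma> permutes {0..<n}" using \<sigma> by (simp add: n_def atLeast0LessThan)
  have sorted: "Matrix.mat n n (\<lambda>(i, j). P $$ (\<sigma> i, j)) = four_block_mat T (0\<^sub>m k k) (0\<^sub>m k k) T'"
  proof (rule eq_matI)
    fix i j assume "i < dim_row (four_block_mat T (0\<^sub>m k k) (0\<^sub>m k k) T')"
      "j < dim_col (four_block_mat T (0\<^sub>m k k) (0\<^sub>m k k) T')"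
    then have ij: "i < n" "j < n" by (auto simp: T_def T'_def n_def)
    then have "Matrix.mat n n (\<lambda>(i, j). P $$ (\<sigma> i, j)) $$ (i, j) = diag_block_rows k rw M1 M2 (\<sigma> i) j"
      using permutes_in_image[OF \<sigma>', of i] by (simp add: P_def)
    also have "\<dots> = four_block_mat T (0\<^sub>m k k) (0\<^sub>m k k) T' $$ (i, j)"
    proof (cases "i < k")
      case True
      then show ?thesis using l[OF True] ij
        by (cases "rw (\<sigma> i)") (auto simp: T_def T'_def diag_block_rows_def n_def)
    next
      case False
      then have "i - k < k" "k + (i - k) = i" using ij by (auto simp: n_def)
      then show ?thesis using False r[of "i - k"] ij
        by (cases "rw (\<sigma> i)") (auto simp: T_def T'_def diag_block_rows_def n_def)
    qed
    finally show "Matrix.mat n n (\<lambda>(i, j). P $$ (\<sigma> i, j)) $$ (i, j) =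
        four_block_mat T (0\<^sub>m k k) (0\<^sub>m k k) T' $$ (i, j)" .
  qed (auto simp: T_def T'_def n_def)
  have "of_int (sign \<sigma>) * Determinant.det P = Determinant.det (Matrix.mat n n (\<lambda>(i, j). P $$ (\<sigma> i, j)))"
    by (rule det_permute_rows[symmetric, OF _ \<sigma>']) (simp add: P_def)
  also have "\<dots> = Determinant.det T * Determinant.det T'"
    unfolding sorted by (rule det_four_block_mat_upper_right_zero) (auto simp: T_def T'_def)
  finally have "of_int (sign \<sigma>) * Determinant.det P = Determinant.det T * Determinant.det T'" .
  moreover have "of_int (sign \<sigma>) * of_int (sign \<sigma>) = (1::complex)"
    by (simp add: sign_def)
  ultimately have "Determinant.det P = of_int (sign \<sigma>) * (Determinant.det T * Determinant.det T')"
    by (metis mult.assoc mult_1)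
  then show ?thesis
    unfolding detn_det n_def[symmetric] P_def T_def T'_def by (simp add: mult.assoc)
qed

lemma detn_diag_block_rows_split:
  assumes inj: "inj_on rw {..<2 * k}" and card: "card {s \<in> {..<2 * k}. isl (rw s)} = k"
  obtains rw1 rw2 \<epsilon> where "inj_on rw1 {..<k}" "inj_on rw2 {..<k}"
    "\<forall>M1 M2. detn (2 * k) (diag_block_rows k rw M1 M2) =
       \<epsilon> * detn k (\<lambda>s i. M1 i (rw1 s)) * detn k (\<lambda>s i. M2 i (rw2 s))"
proof -
  obtain \<sigma> where \<sigma>: "\<sigma> permutes {..<2 * k}" "\<And>s. s < k \<Longrightarrow> isl (rw (\<sigma> s))"
    "\<And>s. s < k \<Longrightarrow> \<not> isl (rw (\<sigma> (k + s)))"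
    using permutation_sorting_rows[OF card] by blast
  define rw1 where "rw1 s = projl (rw (\<sigma> s))" for s
  define rw2 where "rw2 s = projr (rw (\<sigma> (k + s)))" for s
  have \<sigma>_rows: "s = s'" if "rw (\<sigma> s) = rw (\<sigma> s')" "s < 2 * k" "s' < 2 * k" for s s'
    using inj_onD[OF inj that(1)] permutes_in_image[OF \<sigma>(1)] that(2,3) injD[OF permutes_inj[OF \<sigma>(1)]]
    by simp
  have rw12: "rw (\<sigma> s) = Inl (rw1 s)" "rw (\<sigma> (k + s)) = Inr (rw2 s)" if "s < k" for s
    using \<sigma>(2,3)[OF that] by (simp_all add: rw1_def rw2_def)
  have "inj_on rw1 {..<k}"
    by (rule inj_onI) (use \<sigma>_rows rw12 in \<open>fastforce\<close>)
  moreover have "inj_on rw2 {..<k}"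
  proof (rule inj_onI)
    fix s s' assume "s \<in> {..<k}" "s' \<in> {..<k}" "rw2 s = rw2 s'"
    then have "k + s = k + s'" using \<sigma>_rows[of "k + s" "k + s'"] rw12 by simp
    then show "s = s'" by simp
  qed
  moreover have "\<forall>M1 M2. detn (2 * k) (diag_block_rows k rw M1 M2) =
      of_int (sign \<sigma>) * detn k (\<lambda>s i. M1 i (rw1 s)) * detn k (\<lambda>s i. M2 i (rw2 s))"
    using detn_diag_block_rows_sorted[OF \<sigma>(1), of rw] \<sigma>(2,3) by (simp add: rw1_def rw2_def)
  ultimately show thesis by (rule that)
qed

lemma detn_lower_rows_expansion:
  fixes d :: "'l::finite \<Rightarrow> complex"
  shows "detn (2 * k) (\<lambda>i t. if i < k then P t i else \<Sum>l\<in>UNIV. d l * b t (i - k) l) =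
    (\<Sum>\<pi> | \<pi> permutes {..<2 * k}. \<Sum>L\<in>Pi\<^sub>E {..<k} (\<lambda>_. UNIV).
       of_int (sign \<pi>) * (\<Prod>s<k. P (\<pi> s) s) * (\<Prod>s<k. b (\<pi> (k + s)) s (L s)) * (\<Prod>s<k. d (L s)))"
  unfolding detn_def
proof (rule sum.cong[OF refl])
  fix \<pi>
  let ?R = "\<lambda>i t. if i < k then P t i else \<Sum>l\<in>UNIV. d l * b t (i - k) l"
  have "(\<Prod>i<2 * k. ?R i (\<pi> i)) = (\<Prod>s<k. P (\<pi> s) s) * (\<Prod>s<k. \<Sum>l\<in>UNIV. d l * b (\<pi> (k + s)) s l)"
    unfolding mult_2 prod_lessThan_add by simp
  also have "(\<Prod>s<k. \<Sum>l\<in>UNIV. d l * b (\<pi> (k + s)) s l) =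
      (\<Sum>L\<in>Pi\<^sub>E {..<k} (\<lambda>_. UNIV). (\<Prod>s<k. b (\<pi> (k + s)) s (L s)) * (\<Prod>s<k. d (L s)))"
    by (simp add: prod_sum_PiE prod.distrib mult.commute)
  finally show "of_int (sign \<pi>) * (\<Prod>i<2 * k. ?R i (\<pi> i)) = (\<Sum>L\<in>Pi\<^sub>E {..<k} (\<lambda>_. UNIV).
      of_int (sign \<pi>) * (\<Prod>s<k. P (\<pi> s) s) * (\<Prod>s<k. b (\<pi> (k + s)) s (L s)) * (\<Prod>s<k. d (L s)))"
    by (simp add: sum_distrib_left mult.assoc)
qed

lemma ogerm_detn:
  assumes "\<And>s t. s < N \<Longrightarrow> t < N \<Longrightarrow> ogerm a (E s t)"
  shows "ogerm a (\<lambda>z. detn N (\<lambda>s t. E s t z))"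
  unfolding detn_def using assms
  by (intro ogerm_sum ogerm_mult ogerm_const ogerm_prod)
    (auto simp: finite_permutations dest: permutes_in_image)

section \<open>Ideals of germs\<close>

lemma germ_eqI: "open U \<Longrightarrow> a \<in> U \<Longrightarrow> (\<And>z. z \<in> U \<Longrightarrow> z \<in> S \<Longrightarrow> f z = g z) \<Longrightarrow> germ_eq S a f g"
  unfolding germ_eq_def by blast

lemma germ_eq_refl: "germ_eq S a f f"
  unfolding germ_eq_def by blast

lemma germ_eq_trans: "germ_eq S a f g \<Longrightarrow> germ_eq S a g h \<Longrightarrow> germ_eq S a f h"
  unfolding germ_eq_def by (metis IntE IntI open_Int)

lemma germ_eq_common_nbhd:
  assumes "finite T" "\<And>i. i \<in> T \<Longrightarrow> germ_eq S a (f i) (g i)"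
  obtains U where "open U" "a \<in> U" "\<forall>i\<in>T. \<forall>z\<in>U \<inter> S. f i z = g i z"
proof -
  from assms have "\<exists>U. open U \<and> a \<in> U \<and> (\<forall>i\<in>T. \<forall>z\<in>U \<inter> S. f i z = g i z)"
  proof (induction T rule: finite_induct)
    case empty
    show ?case by (intro exI[of _ UNIV]) auto
  next
    case (insert j T)
    then obtain U where "open U" "a \<in> U" "\<forall>i\<in>T. \<forall>z\<in>U \<inter> S. f i z = g i z" by blast
    moreover obtain V where "open V" "a \<in> V" "\<forall>z\<in>V \<inter> S. f j z = g j z"
      using insert.prems[of j] unfolding germ_eq_def by blast
    ultimately show ?case by (intro exI[of _ "U \<inter> V"]) auto
  qed
  then show thesis using that by blast
qed

lemma ideal_genE:
  assumes "f \<in> ideal_gen S a G"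
  obtains N :: nat and c q where "\<forall>j<N. ogerm a (c j) \<and> q j \<in> G"
    "germ_eq S a f (\<lambda>z. \<Sum>j<N. c j z * q j z)" "ogerm a f"
  using assms unfolding ideal_gen_def by blast

lemma ideal_genI:
  fixes N :: nat
  assumes "\<forall>j<N. ogerm a (c j) \<and> q j \<in> G"
    "germ_eq S a f (\<lambda>z. \<Sum>j<N. c j z * q j z)" "ogerm a f"
  shows "f \<in> ideal_gen S a G"
  using assms unfolding ideal_gen_def by blast

lemma ideal_gen_ogerm: "f \<in> ideal_gen S a G \<Longrightarrow> ogerm a f"
  unfolding ideal_gen_def by auto

lemma ideal_gen_germ_eq: "f \<in> ideal_gen S a G \<Longrightarrow> germ_eq S a g f \<Longrightarrow> ogerm a g \<Longrightarrow> g \<in> ideal_gen S a G"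
  unfolding ideal_gen_def by (auto intro: germ_eq_trans)

lemma ideal_gen_generator: "q \<in> G \<Longrightarrow> ogerm a q \<Longrightarrow> q \<in> ideal_gen S a G"
  by (rule ideal_genI[where N = 1 and c = "\<lambda>_ _. 1" and q = "\<lambda>_. q"]) (auto intro: germ_eq_refl)

lemma ideal_gen_zero: "(\<lambda>z. 0) \<in> ideal_gen S a G"
  by (rule ideal_genI[where N = 0]) (auto intro: germ_eq_refl)

lemma ideal_gen_add:
  assumes "f \<in> ideal_gen S a G" "g \<in> ideal_gen S a G"
  shows "(\<lambda>z. f z + g z) \<in> ideal_gen S a G"
proof -
  obtain N1 :: nat and c1 q1 where 1: "\<forall>j<N1. ogerm a (c1 j) \<and> q1 j \<in> G"
      "germ_eq S a f (\<lambda>z. \<Sum>j<N1. c1 j z * q1 j z)" "ogerm a f"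
    using assms(1) by (rule ideal_genE)
  obtain N2 :: nat and c2 q2 where 2: "\<forall>j<N2. ogerm a (c2 j) \<and> q2 j \<in> G"
      "germ_eq S a g (\<lambda>z. \<Sum>j<N2. c2 j z * q2 j z)" "ogerm a g"
    using assms(2) by (rule ideal_genE)
  define c where "c j = (if j < N1 then c1 j else c2 (j - N1))" for j
  define q where "q j = (if j < N1 then q1 j else q2 (j - N1))" for j
  obtain U V where "open U" "a \<in> U" "\<forall>z\<in>U \<inter> S. f z = (\<Sum>j<N1. c1 j z * q1 j z)"
    and "open V" "a \<in> V" "\<forall>z\<in>V \<inter> S. g z = (\<Sum>j<N2. c2 j z * q2 j z)"
    using 1(2) 2(2) unfolding germ_eq_def by blast
  then have "germ_eq S a (\<lambda>z. f z + g z) (\<lambda>z. \<Sum>j<N1 + N2. c j z * q j z)"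
    by (intro germ_eqI[of "U \<inter> V"]) (auto simp: sum_lessThan_add c_def q_def)
  then show ?thesis
    using 1 2 by (intro ideal_genI[where c = c and q = q]) (auto simp: c_def q_def)
qed

lemma ideal_gen_mult_left:
  assumes "ogerm a c" "f \<in> ideal_gen S a G"
  shows "(\<lambda>z. c z * f z) \<in> ideal_gen S a G"
proof -
  obtain N :: nat and c1 q where f: "\<forall>j<N. ogerm a (c1 j) \<and> q j \<in> G"
      "germ_eq S a f (\<lambda>z. \<Sum>j<N. c1 j z * q j z)" "ogerm a f"
    using assms(2) by (rule ideal_genE)
  obtain U where "open U" "a \<in> U" "\<forall>z\<in>U \<inter> S. f z = (\<Sum>j<N. c1 j z * q j z)"
    using f(2) unfolding germ_eq_def by blast
  then have "germ_eq S a (\<lambda>z. c z * f z) (\<lambda>z. \<Sum>j<N. (c z * c1 j z) * q j z)"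
    by (intro germ_eqI[of U]) (auto simp: sum_distrib_left mult.assoc)
  then show ?thesis
    using f assms(1) by (intro ideal_genI[where c = "\<lambda>j z. c z * c1 j z" and q = q]) auto
qed

lemma ideal_gen_sum:
  "finite T \<Longrightarrow> (\<And>i. i \<in> T \<Longrightarrow> f i \<in> ideal_gen S a G) \<Longrightarrow> (\<lambda>z. \<Sum>i\<in>T. f i z) \<in> ideal_gen S a G"
  by (induction T rule: finite_induct) (auto intro: ideal_gen_zero ideal_gen_add)

lemma ideal_gen_least:
  assumes "\<And>q. q \<in> G \<Longrightarrow> q \<in> ideal_gen S a G'"
  shows "ideal_gen S a G \<subseteq> ideal_gen S a G'"
proof
  fix f assume "f \<in> ideal_gen S a G"
  then obtain N :: nat and c q where f: "\<forall>j<N. ogerm a (c j) \<and> q j \<in> G"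
      "germ_eq S a f (\<lambda>z. \<Sum>j<N. c j z * q j z)" "ogerm a f"
    by (rule ideal_genE)
  have "(\<lambda>z. \<Sum>j<N. c j z * q j z) \<in> ideal_gen S a G'"
    using f(1) assms by (intro ideal_gen_sum ideal_gen_mult_left) auto
  then show "f \<in> ideal_gen S a G'"
    using f(2,3) by (rule ideal_gen_germ_eq)
qed

lemma ideal_mult_prod: "f \<in> I \<Longrightarrow> g \<in> J \<Longrightarrow> ogerm a (\<lambda>z. f z * g z) \<Longrightarrow> (\<lambda>z. f z * g z) \<in> ideal_mult S a I J"
  unfolding ideal_mult_def by (auto intro!: ideal_gen_generator)

lemma ogerm_diag_diff [intro]: "ogerm (dpt x) (\<lambda>w. pi2 w $ l - pi1 w $ l)"
  by (intro ogerm_diff ogerm_pi1 ogerm_pi2 ogerm_component)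

lemma diag_diff_in_I_Delta: "(\<lambda>w. pi2 w $ l - pi1 w $ l) \<in> I_Delta X x"
proof -
  have "(\<lambda>w. pi1 w $ l - pi2 w $ l) \<in> I_Delta X x"
    unfolding I_Delta_def
    by (rule ideal_gen_generator) (auto intro!: ogerm_diff ogerm_pi1 ogerm_pi2 ogerm_component)
  from ideal_gen_mult_left[OF ogerm_const[of _ "-1"] this[unfolded I_Delta_def]]
  show ?thesis by (simp add: I_Delta_def)
qed

lemma prod_diag_diff_in_ideal_pow:
  "(\<lambda>w. \<Prod>s<j. pi2 w $ L s - pi1 w $ L s) \<in> ideal_pow (XX X) (dpt x) (I_Delta X x) j"
proof (induction j)
  case 0
  show ?case by (simp add: ideal_gen_generator)
next
  case (Suc j)
  from ideal_mult_prod[OF Suc diag_diff_in_I_Delta] show ?case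
    by (simp add: ogerm_prod ogerm_mult ogerm_diag_diff)
qed

lemma doubled_minor_2_in_minors:
  assumes "F \<in> I" "G \<in> I"
  shows "(\<lambda>w. F (pi1 w) * G (pi2 w) - G (pi1 w) * F (pi2 w)) \<in> minors 2 (Dset (ideal_vecs I))"
  unfolding minors_def mem_Collect_eq
proof (intro exI conjI)
  let ?col = "\<lambda>t::nat. Dvec (\<lambda>_::unit. if t = 0 then F else G)"
  let ?rw = "\<lambda>s::nat. if s = 0 then Inl () else Inr ()"
  show "\<forall>t<2. ?col t \<in> Dset (ideal_vecs I)"
    using assms by (auto simp: Dset_def ideal_vecs_def)
  show "inj_on ?rw {..<2}" by (auto simp: inj_on_def)
  show "(\<lambda>w. F (pi1 w) * G (pi2 w) - G (pi1 w) * F (pi2 w)) = (\<lambda>z. detn 2 (\<lambda>s t. ?col t (?rw s) z))"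
    by (simp add: detn_2 Dvec_def)
qed

text \<open>\<open>(z\<^sub>l \<circ> \<pi>\<^sub>2 - z\<^sub>l \<circ> \<pi>\<^sub>1) F\<^sub>1 G\<^sub>2 = det(F\<^sub>D, (z\<^sub>l G)\<^sub>D) - (z\<^sub>l \<circ> \<pi>\<^sub>1) det(F\<^sub>D, G\<^sub>D)\<close>,
  where \<open>F\<^sub>i = F \<circ> \<pi>\<^sub>i\<close>.\<close>
lemma diag_diff_mult_in_I_minors_2:
  assumes F: "F \<in> ideal_gen X x G0" and G: "G \<in> ideal_gen X x G0"
  shows "(\<lambda>w. (pi2 w $ l - pi1 w $ l) * (F (pi1 w) * G (pi2 w))) \<in>
    I_minors (XX X) (dpt x) 2 (Dset (ideal_vecs (ideal_gen X x G0)))"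
proof -
  let ?I = "ideal_gen X x G0"
  have zG: "(\<lambda>z. z $ l * G z) \<in> ?I" using G by (rule ideal_gen_mult_left[OF ogerm_component])
  have germs: "ogerm x F" "ogerm x G" "ogerm x (\<lambda>z. z $ l * G z)"
    using F G zG by (auto intro: ideal_gen_ogerm)
  define M1 where "M1 w = F (pi1 w) * (pi2 w $ l * G (pi2 w)) - pi1 w $ l * G (pi1 w) * F (pi2 w)" for w
  define M2 where "M2 w = F (pi1 w) * G (pi2 w) - G (pi1 w) * F (pi2 w)" for w
  have "M1 \<in> I_minors (XX X) (dpt x) 2 (Dset (ideal_vecs ?I))"
    unfolding I_minors_def M1_def using doubled_minor_2_in_minors[OF F zG] germs
    by (intro ideal_gen_generator) (auto intro!: ogerm_diff ogerm_mult ogerm_pi1 ogerm_pi2)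
  moreover have "M2 \<in> I_minors (XX X) (dpt x) 2 (Dset (ideal_vecs ?I))"
    unfolding I_minors_def M2_def using doubled_minor_2_in_minors[OF F G] germs
    by (intro ideal_gen_generator) (auto intro!: ogerm_diff ogerm_mult ogerm_pi1 ogerm_pi2)
  ultimately have "(\<lambda>w. M1 w + (- pi1 w $ l) * M2 w) \<in> I_minors (XX X) (dpt x) 2 (Dset (ideal_vecs ?I))"
    unfolding I_minors_def by (intro ideal_gen_add ideal_gen_mult_left ogerm_uminus ogerm_pi1 ogerm_component)
  moreover have "(\<lambda>w. M1 w + (- pi1 w $ l) * M2 w) = (\<lambda>w. (pi2 w $ l - pi1 w $ l) * (F (pi1 w) * G (pi2 w)))"
    by (simp add: fun_eq_iff M1_def M2_def algebra_simps)
  ultimately show ?thesis by simp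
qed

lemma ogerm_in_span_mod:
  assumes "\<And>r. ogerm x (m t r)" "t < k"
  shows "m t \<in> span_mod X x k m"
proof -
  have "(\<Sum>i<k. (if i = t then 1 else 0) * m i r z) = m t r z" for r z
    using assms(2) by (simp add: if_distrib[of "\<lambda>c. c * _"] sum.If_cases)
  then show ?thesis
    using assms(1) unfolding span_mod_def
    by (intro CollectI conjI allI exI[of _ "\<lambda>i z. if i = t then 1 else 0"]) (auto intro: germ_eq_refl)
qed

lemma minor_of_generators_in_I_minors:
  assumes m: "\<And>i r. i < k \<Longrightarrow> ogerm x (m i r)" and rw: "inj_on rw {..<k}"
  shows "(\<lambda>z. detn k (\<lambda>s i. m i (rw s) z)) \<in> I_minors X x k (span_mod X x k m)"
  unfolding I_minors_def
proof (rule ideal_gen_generator)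
  show "(\<lambda>z. detn k (\<lambda>s i. m i (rw s) z)) \<in> minors k (span_mod X x k m)"
  proof -
    have "m t \<in> span_mod X x k m" if "t < k" for t
      using m that by (intro ogerm_in_span_mod)
    then show ?thesis unfolding minors_def using rw by blast
  qed
  show "ogerm x (\<lambda>z. detn k (\<lambda>s i. m i (rw s) z))"
    using m by (intro ogerm_detn) auto
qed

lemma span_mod_common_coefficients:
  fixes h :: "nat \<Rightarrow> 'p::finite \<Rightarrow> complex^'n \<Rightarrow> complex"
  assumes "\<And>t. t < N \<Longrightarrow> h t \<in> span_mod X x k m"
  obtains A U where "open U" "x \<in> U" "\<forall>t<N. \<forall>i<k. ogerm x (A t i)"
    "\<forall>t<N. \<forall>r. \<forall>z\<in>U \<inter> X. h t r z = (\<Sum>i<k. A t i z * m i r z)"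
proof -
  have "\<forall>t. \<exists>a. t < N \<longrightarrow> (\<forall>i<k. ogerm x (a i)) \<and> (\<forall>r. germ_eq X x (h t r) (\<lambda>z. \<Sum>i<k. a i z * m i r z))"
    using assms unfolding span_mod_def by blast
  from choice[OF this] obtain A where A: "\<And>t i. t < N \<Longrightarrow> i < k \<Longrightarrow> ogerm x (A t i)"
    and eq: "\<And>t r. t < N \<Longrightarrow> germ_eq X x (h t r) (\<lambda>z. \<Sum>i<k. A t i z * m i r z)"
    by blast
  have "finite ({..<N} \<times> (UNIV :: 'p set))" by simp
  moreover have "germ_eq X x (h (fst p) (snd p)) (\<lambda>z. \<Sum>i<k. A (fst p) i z * m i (snd p) z)"
    if "p \<in> {..<N} \<times> UNIV" for p
    using eq that by auto
  ultimately obtain U where "open U" "x \<in> U"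
    "\<forall>p\<in>{..<N} \<times> UNIV. \<forall>z\<in>U \<inter> X. h (fst p) (snd p) z = (\<Sum>i<k. A (fst p) i z * m i (snd p) z)"
    by (rule germ_eq_common_nbhd)
  then show thesis
    using A by (intro that[of U A]) (auto simp: Ball_def)
qed

section \<open>Minors of the doubled module\<close>

lemma diag_expansion_in_I_Delta_pow_I_minors_2:
  assumes k: "k \<ge> 1" and F: "F \<in> I_minors X x k N" and G: "G \<in> I_minors X x k N"
    and P: "\<And>t i. t < 2 * k \<Longrightarrow> i < k \<Longrightarrow> ogerm (dpt x) (P t i)"
    and b: "\<And>t i l. t < 2 * k \<Longrightarrow> i < k \<Longrightarrow> ogerm (dpt x) (b t i l)"
  shows "(\<lambda>w. F (pi1 w) * G (pi2 w) *
      detn (2 * k) (\<lambda>i t. if i < k then P t i w else \<Sum>l\<in>UNIV. (pi2 w $ l - pi1 w $ l) * b t (i - k) l w))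
    \<in> ideal_mult (XX X) (dpt x) (ideal_pow (XX X) (dpt x) (I_Delta X x) (k - 1))
        (I_minors (XX X) (dpt x) 2 (Dset (ideal_vecs (I_minors X x k N))))"
    (is "?q \<in> ?R")
proof -
  let ?d = "\<lambda>l w. pi2 w $ l - pi1 w $ l"
  define c where "c \<pi> L w = of_int (sign \<pi>) * (\<Prod>s<k. P (\<pi> s) s w) * (\<Prod>s<k. b (\<pi> (k + s)) s (L s) w)" for \<pi> L w
  define E where "E L w = ?d (L (k - 1)) w * (F (pi1 w) * G (pi2 w))" for L w
  have d_split: "(\<Prod>s<k. ?d (L s) w) = (\<Prod>s<k - 1. ?d (L s) w) * ?d (L (k - 1)) w" for L w
    using k prod.lessThan_Suc[of "\<lambda>s. ?d (L s) w" "k - 1"] by simp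
  have "?q w = (\<Sum>\<pi> | \<pi> permutes {..<2 * k}. \<Sum>L\<in>Pi\<^sub>E {..<k} (\<lambda>_. UNIV).
      c \<pi> L w * ((\<Prod>s<k - 1. ?d (L s) w) * E L w))" for w
    unfolding detn_lower_rows_expansion[where P = "\<lambda>t i. P t i w" and d = "\<lambda>l. ?d l w"
        and b = "\<lambda>t i l. b t i l w"]
      sum_distrib_left
    by (intro sum.cong refl) (simp add: c_def E_def d_split mult_ac)
  then have "?q = (\<lambda>w. \<Sum>\<pi> | \<pi> permutes {..<2 * k}. \<Sum>L\<in>Pi\<^sub>E {..<k} (\<lambda>_. UNIV).
      c \<pi> L w * ((\<Prod>s<k - 1. ?d (L s) w) * E L w))"
    by (rule ext)
  also have "\<dots> \<in> ?R"
    unfolding ideal_mult_def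
  proof (intro ideal_gen_sum)
    fix \<pi> L assume "\<pi> \<in> {\<pi>. \<pi> permutes {..<2 * k}}"
    then have "\<pi> s < 2 * k" if "s < 2 * k" for s
      using permutes_in_image that by fastforce
    then have "ogerm (dpt x) (c \<pi> L)"
      unfolding c_def[abs_def] using P b by (intro ogerm_mult ogerm_prod ogerm_const) auto
    moreover have "E L \<in> I_minors (XX X) (dpt x) 2 (Dset (ideal_vecs (I_minors X x k N)))"
      using diag_diff_mult_in_I_minors_2[OF F[unfolded I_minors_def] G[unfolded I_minors_def]]
      by (simp add: E_def[abs_def] I_minors_def)
    then have "(\<lambda>w. (\<Prod>s<k - 1. ?d (L s) w) * E L w) \<in> ?R"
      by (intro ideal_mult_prod prod_diag_diff_in_ideal_pow ogerm_mult ogerm_prod ogerm_diag_diff)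
        (auto simp: I_minors_def intro: ideal_gen_ogerm)
    ultimately show "(\<lambda>w. c \<pi> L w * ((\<Prod>s<k - 1. ?d (L s) w) * E L w)) \<in> ideal_gen (XX X) (dpt x)
        {h. \<exists>f g. f \<in> ideal_pow (XX X) (dpt x) (I_Delta X x) (k - 1) \<and>
          g \<in> I_minors (XX X) (dpt x) 2 (Dset (ideal_vecs (I_minors X x k N))) \<and> h = (\<lambda>z. f z * g z)}"
      unfolding ideal_mult_def by (rule ideal_gen_mult_left)
  qed (simp_all add: finite_permutations finite_PiE)
  finally show ?thesis .
qed

lemma doubled_minor_factorization:
  fixes m h :: "nat \<Rightarrow> 'p::finite \<Rightarrow> complex^'n \<Rightarrow> complex" and rw :: "nat \<Rightarrow> 'p + 'p"
  assumes h: "\<And>t. t < 2 * k \<Longrightarrow> h t \<in> span_mod X x k m"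
  obtains W A b where "open W" "dpt x \<in> W" "\<forall>t<2 * k. \<forall>i<k. ogerm x (A t i)"
    "\<forall>t<2 * k. \<forall>i<k. \<forall>l. ogerm (dpt x) (b t i l)"
    "\<forall>w\<in>W \<inter> XX X. detn (2 * k) (\<lambda>s t. Dvec (h t) (rw s) w) =
       detn (2 * k) (diag_block_rows k rw (\<lambda>i r. m i r (pi1 w)) (\<lambda>i r. m i r (pi2 w))) *
       detn (2 * k) (\<lambda>i t. if i < k then A t i (pi1 w)
         else \<Sum>l\<in>UNIV. (pi2 w $ l - pi1 w $ l) * b t (i - k) l w)"
proof -
  obtain A U where U: "open U" "x \<in> U" and A: "\<forall>t<2 * k. \<forall>i<k. ogerm x (A t i)"
    and h_eq: "\<forall>t<2 * k. \<forall>r. \<forall>z\<in>U \<inter> X. h t r z = (\<Sum>i<k. A t i z * m i r z)"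
    by (rule span_mod_common_coefficients[OF h])
  have "finite ({..<2 * k} \<times> {..<k})" "\<forall>p\<in>{..<2 * k} \<times> {..<k}. ogerm x (A (fst p) (snd p))"
    using A by auto
  then obtain W b where W: "open W" "dpt x \<in> W"
    and b: "\<forall>p\<in>{..<2 * k} \<times> {..<k}. \<forall>l. ogerm (dpt x) (b p l)"
    and b_eq: "\<forall>p\<in>{..<2 * k} \<times> {..<k}. \<forall>w\<in>W. A (fst p) (snd p) (pi2 w) - A (fst p) (snd p) (pi1 w) =
      (\<Sum>l\<in>UNIV. (pi2 w $ l - pi1 w $ l) * b p l w)"
    by (rule hadamard_lemma_family)
  define W' where "W' = W \<inter> pi1 -` U \<inter> pi2 -` U"
  have "open W'" "dpt x \<in> W'"
    using W U unfolding W'_def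
    by (auto intro!: open_Int open_vimage linear_continuous_on bounded_linear_pi1 bounded_linear_pi2)
  moreover have "\<forall>w\<in>W' \<inter> XX X. detn (2 * k) (\<lambda>s t. Dvec (h t) (rw s) w) =
       detn (2 * k) (diag_block_rows k rw (\<lambda>i r. m i r (pi1 w)) (\<lambda>i r. m i r (pi2 w))) *
       detn (2 * k) (\<lambda>i t. if i < k then A t i (pi1 w)
         else \<Sum>l\<in>UNIV. (pi2 w $ l - pi1 w $ l) * b (t, i - k) l w)"
    (is "\<forall>w\<in>_. ?factor w")
  proof
    fix w assume w: "w \<in> W' \<inter> XX X"
    let ?B = "detn (2 * k) (diag_block_rows k rw (\<lambda>i r. m i r (pi1 w)) (\<lambda>i r. m i r (pi2 w)))"
    have "pi1 w \<in> U \<inter> X" "pi2 w \<in> U \<inter> X"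
      using w by (auto simp: W'_def XX_def)
    then have "detn (2 * k) (\<lambda>s t. Dvec (h t) (rw s) w) = ?B *
        detn (2 * k) (\<lambda>i t. if i < k then A t i (pi1 w) else A t (i - k) (pi2 w) - A t (i - k) (pi1 w))"
      using h_eq by (intro detn_block_factor) (auto simp: Dvec_def split: sum.split)
    also have "\<dots> = ?B * detn (2 * k) (\<lambda>i t. if i < k then A t i (pi1 w)
        else \<Sum>l\<in>UNIV. (pi2 w $ l - pi1 w $ l) * b (t, i - k) l w)"
    proof (intro arg_cong[where f = "\<lambda>D. ?B * D"] detn_cong)
      fix i t assume "i < 2 * k" "t < 2 * k"
      then show "(if i < k then A t i (pi1 w) else A t (i - k) (pi2 w) - A t (i - k) (pi1 w)) =
          (if i < k then A t i (pi1 w) else \<Sum>l\<in>UNIV. (pi2 w $ l - pi1 w $ l) * b (t, i - k) l w)"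
        using bspec[OF bspec[OF b_eq, of "(t, i - k)"], of w] w by (auto simp: W'_def)
    qed
    finally show "?factor w" .
  qed
  ultimately show thesis
    using A b by (intro that[of W' A "\<lambda>t i. b (t, i)"]) auto
qed

lemma doubled_minor_in_I_Delta_pow_I_minors_2:
  fixes m h :: "nat \<Rightarrow> 'p::finite \<Rightarrow> complex^'n \<Rightarrow> complex" and rw :: "nat \<Rightarrow> 'p + 'p"
  assumes k: "k \<ge> 1" and m: "\<And>i r. i < k \<Longrightarrow> ogerm x (m i r)"
    and h: "\<And>t. t < 2 * k \<Longrightarrow> h t \<in> span_mod X x k m" and rw: "inj_on rw {..<2 * k}"
  shows "(\<lambda>w. detn (2 * k) (\<lambda>s t. Dvec (h t) (rw s) w)) \<in> ideal_mult (XX X) (dpt x)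
    (ideal_pow (XX X) (dpt x) (I_Delta X x) (k - 1))
    (I_minors (XX X) (dpt x) 2 (Dset (ideal_vecs (I_minors X x k (span_mod X x k m)))))"
    (is "?q \<in> ?R")
proof -
  obtain W A b where W: "open W" "dpt x \<in> W" and A: "\<forall>t<2 * k. \<forall>i<k. ogerm x (A t i)"
    and b: "\<forall>t<2 * k. \<forall>i<k. \<forall>l. ogerm (dpt x) (b t i l)"
    and factor: "\<forall>w\<in>W \<inter> XX X. ?q w =
       detn (2 * k) (diag_block_rows k rw (\<lambda>i r. m i r (pi1 w)) (\<lambda>i r. m i r (pi2 w))) *
       detn (2 * k) (\<lambda>i t. if i < k then A t i (pi1 w)
         else \<Sum>l\<in>UNIV. (pi2 w $ l - pi1 w $ l) * b t (i - k) l w)"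
    by (rule doubled_minor_factorization[OF h])
  let ?Q = "\<lambda>w. detn (2 * k) (\<lambda>i t. if i < k then A t i (pi1 w)
    else \<Sum>l\<in>UNIV. (pi2 w $ l - pi1 w $ l) * b t (i - k) l w)"
  have "ogerm (dpt x) ?q"
  proof (rule ogerm_detn)
    fix s t assume "t < 2 * k"
    then have "ogerm x (h t r)" for r
      using h by (simp add: span_mod_def)
    then show "ogerm (dpt x) (Dvec (h t) (rw s))"
      by (cases "rw s") (auto simp: Dvec_def intro: ogerm_pi1 ogerm_pi2)
  qed
  show ?thesis
  proof (cases "card {s \<in> {..<2 * k}. isl (rw s)} = k")
    case False
    have "germ_eq (XX X) (dpt x) ?q (\<lambda>w. 0)"
      using factor detn_diag_block_rows_eq_0[OF False] by (intro germ_eqI[OF W]) simp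
    then show ?thesis
      unfolding ideal_mult_def by (rule ideal_gen_germ_eq[OF ideal_gen_zero _ \<open>ogerm (dpt x) ?q\<close>])
  next
    case True
    then obtain rw1 rw2 \<epsilon> where rw12: "inj_on rw1 {..<k}" "inj_on rw2 {..<k}"
      and B: "\<forall>M1 M2. detn (2 * k) (diag_block_rows k rw M1 M2) =
        \<epsilon> * detn k (\<lambda>s i. M1 i (rw1 s)) * detn k (\<lambda>s i. M2 i (rw2 s))"
      by (rule detn_diag_block_rows_split[OF rw])
    define F where "F z = detn k (\<lambda>s i. m i (rw1 s) z)" for z
    define G where "G z = detn k (\<lambda>s i. m i (rw2 s) z)" for z
    have "F \<in> I_minors X x k (span_mod X x k m)" "G \<in> I_minors X x k (span_mod X x k m)"
      unfolding F_def[abs_def] G_def[abs_def] using m rw12 by (auto intro: minor_of_generators_in_I_minors)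
    moreover have "ogerm (dpt x) (\<lambda>w. A t i (pi1 w))" "ogerm (dpt x) (b t i l)" if "t < 2 * k" "i < k" for t i l
      using A b that by auto
    ultimately have "(\<lambda>w. F (pi1 w) * G (pi2 w) * ?Q w) \<in> ?R"
      by (rule diag_expansion_in_I_Delta_pow_I_minors_2[OF k])
    then have "(\<lambda>w. \<epsilon> * (F (pi1 w) * G (pi2 w) * ?Q w)) \<in> ?R"
      unfolding ideal_mult_def by (rule ideal_gen_mult_left[OF ogerm_const])
    moreover have "germ_eq (XX X) (dpt x) ?q (\<lambda>w. \<epsilon> * (F (pi1 w) * G (pi2 w) * ?Q w))"
      using factor by (intro germ_eqI[OF W]) (simp add: B F_def G_def)
    ultimately show ?thesis
      unfolding ideal_mult_def using \<open>ogerm (dpt x) ?q\<close> by (rule ideal_gen_germ_eq)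
  qed
qed

lemma minors_doubled_span_in_I_Delta_pow_I_minors_2:
  fixes m :: "nat \<Rightarrow> 'p::finite \<Rightarrow> complex^'n \<Rightarrow> complex"
  assumes k: "k \<ge> 1" and m: "\<And>i r. i < k \<Longrightarrow> ogerm x (m i r)"
    and q: "q \<in> minors (2 * k) (Dset (span_mod X x k m))"
  shows "q \<in> ideal_mult (XX X) (dpt x) (ideal_pow (XX X) (dpt x) (I_Delta X x) (k - 1))
    (I_minors (XX X) (dpt x) 2 (Dset (ideal_vecs (I_minors X x k (span_mod X x k m)))))"
proof -
  obtain col rw where col: "\<forall>t<2 * k. col t \<in> Dset (span_mod X x k m)" and rw: "inj_on rw {..<2 * k}"
    and q_eq: "q = (\<lambda>z. detn (2 * k) (\<lambda>s t. col t (rw s) z))"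
    using q unfolding minors_def by blast
  have "\<forall>t. \<exists>h. t < 2 * k \<longrightarrow> h \<in> span_mod X x k m \<and> col t = Dvec h"
    using col by (auto simp: Dset_def image_iff)
  from choice[OF this] obtain h where h: "\<forall>t. t < 2 * k \<longrightarrow> h t \<in> span_mod X x k m \<and> col t = Dvec (h t)"
    by (rule exE)
  have "q = (\<lambda>z. detn (2 * k) (\<lambda>s t. Dvec (h t) (rw s) z))"
    unfolding q_eq using h by (intro ext detn_cong) simp
  also have "\<dots> \<in> ideal_mult (XX X) (dpt x) (ideal_pow (XX X) (dpt x) (I_Delta X x) (k - 1))
      (I_minors (XX X) (dpt x) 2 (Dset (ideal_vecs (I_minors X x k (span_mod X x k m)))))"
    using h by (intro doubled_minor_in_I_Delta_pow_I_minors_2[OF k m _ rw]) auto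
  finally show ?thesis .
qed

theorem lemma3p5:
  fixes X :: "(complex^'n) set" and x :: "complex^'n" and k :: nat
    and m :: "nat \<Rightarrow> 'p::finite \<Rightarrow> complex^'n \<Rightarrow> complex"
  assumes "analytic_variety X" and "x \<in> X" and "k \<ge> 1"
    and "lin_indep_germs X x k m"
  shows "I_minors (XX X) (dpt x) (2*k) (Dset (span_mod X x k m))
    \<subseteq> ideal_mult (XX X) (dpt x)
         (ideal_pow (XX X) (dpt x) (I_Delta X x) (k - 1))
         (I_minors (XX X) (dpt x) 2 (Dset (ideal_vecs (I_minors X x k (span_mod X x k m)))))"
proof -
  have m: "\<And>i r. i < k \<Longrightarrow> ogerm x (m i r)"
    using assms(4) by (simp add: lin_indep_germs_def)
  show ?thesis
    unfolding I_minors_def[of "XX X" "dpt x" "2 * k"] ideal_mult_def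
    by (intro ideal_gen_least)
      (rule minors_doubled_span_in_I_Delta_pow_I_minors_2[OF assms(3) m, unfolded ideal_mult_def])
qed

end
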